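(* Let $\Gamma$ be a regular rooted metric tree with root $o$, of infinite height (i.e. $\sup_{x\in\Gamma}|x|=\infty$) and of finite reduced height, i.e. $$\int_0^\infty \frac{dt}{g_0(t)}<\infty .$$ Let $\psi$ be a measurable, non-negative function on $\mathbb{R}_+$. Then there exists a constant $C(\Gamma,\psi)<\infty$ such that $$\int_{\Gamma} \psi(|x|)\, |u(x)|^2 \, dx \leq C(\Gamma,\psi) \int_{\Gamma} |u'(x)|^2\, dx \quad \text{for all } u \in C_0^\infty(\Gamma_o)$$ if and only if $$M(\Gamma,\psi) := \sup_{t>0} \left( \int_0^t \psi(s)\, g_0(s)\,ds \right) \left( \int_t^\infty \frac{ds}{g_0(s)} \right) < \infty .$$ Moreover, the sharp (smallest) constant $C(\Gamma,\psi)$ in this inequality satisfies $M(\Gamma,\psi) \leq C(\Gamma,\psi) \leq 4\, M(\Gamma,\psi)$.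
   Context: $\Gamma$ is a rooted metric tree with root $o$; $|x|$ denotes the distance (along the tree) from $x\in\Gamma$ to $o$. The branching number $b(x)$ of a vertex $x$ is the number of edges emanating from $x$; it is assumed that $b(o)=1$ and $b(x)>1$ for every vertex $x\neq o$. The tree is regular: all vertices at the same distance from the root have the same branching number, and all edges emanating from these vertices have the same length. For a vertex $x$ such that the path from $o$ to $x$ contains $k+1$ vertices (endpoints included), write $t_k=|x|$ and $b_k=b(x)$; set $t_0=0$, $b_0=1$. The branching function is $g_0(t)=\#\{x\in\Gamma: |x|=t\}$, equivalently $g_0(t)=b_0b_1\cdots b_k$ for $t_k<t\le t_{k+1}$. $\Gamma_o:=\Gamma\cup\{o\}$, and $C_0^\infty(\Gamma_o)$ denotes the class of (continuous on $\Gamma$, edgewise) infinitely smooth functions on $\Gamma_o$ whose support is a bounded subset of $\Gamma_o$; such functions need not vanish at the root. Integration over $\Gamma$ is with respect to arc length, and $u'$ is the derivative along the edges. *)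

theory Defs
  imports "HOL-Analysis.Analysis"
begin

text \<open>A regular rooted metric tree is encoded by the heights T k = t_k of the
vertices of generation k (T k = infinity means: there is no vertex of generation k,
the edges of generation k-1 are infinite rays) and the branching numbers b k = b_k.\<close>

definition reg_tree :: "(nat \<Rightarrow> ereal) \<Rightarrow> (nat \<Rightarrow> nat) \<Rightarrow> bool" where
  "reg_tree T b \<longleftrightarrow> T 0 = 0 \<and> (\<forall>k. T k < \<infinity> \<longrightarrow> T k < T (Suc k))
     \<and> (\<forall>k. T k = \<infinity> \<longrightarrow> T (Suc k) = \<infinity>)
     \<and> b 0 = 1 \<and> (\<forall>k. 1 \<le> k \<longrightarrow> T k < \<infinity> \<longrightarrow> 2 \<le> b k)"

definition g0 :: "(nat \<Rightarrow> ereal) \<Rightarrow> (nat \<Rightarrow> nat) \<Rightarrow> real \<Rightarrow> real" where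
  "g0 T b s = (\<Prod>i\<in>{i. T i < ereal s}. real (b i))"

text \<open>Points of the tree at distance s > 0 from the root are the pairs (s, w) with
w in level T b s: w = [w_0,...,w_k] (t_k < s <= t_{k+1}) records which edge is taken at
each vertex of the path from the root.  The root is the pair (0, []).\<close>
definition level :: "(nat \<Rightarrow> ereal) \<Rightarrow> (nat \<Rightarrow> nat) \<Rightarrow> real \<Rightarrow> nat list set" where
  "level T b s = {w. length w = card {i. T i < ereal s} \<and> (\<forall>i<length w. w ! i < b i)}"

definition smooth_fun :: "(real \<Rightarrow> real) \<Rightarrow> bool" where
  "smooth_fun f \<longleftrightarrow> (\<forall>n x. ((deriv ^^ n) f) differentiable (at x))"

text \<open>u in C_0^infinity(Gamma_o): on every closed edge [t_k, t_{k+1}] (whose lower endpoint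
is the parent vertex (t_k, butlast w)) u is the restriction of a C^infinity function
(this also encodes continuity at the vertices and at the root), and u has bounded support.\<close>
definition C0inf :: "(nat \<Rightarrow> ereal) \<Rightarrow> (nat \<Rightarrow> nat) \<Rightarrow> (real \<Rightarrow> nat list \<Rightarrow> real) \<Rightarrow> bool" where
  "C0inf T b u \<longleftrightarrow>
     (\<forall>k w. T k < \<infinity> \<longrightarrow> length w = Suc k \<longrightarrow> (\<forall>i<length w. w ! i < b i) \<longrightarrow>
        (\<exists>f. smooth_fun f \<and>
           (\<forall>s. T k \<le> ereal s \<and> ereal s \<le> T (Suc k) \<longrightarrow>
                 f s = (if ereal s = T k then u s (butlast w) else u s w))))
   \<and> (\<exists>R. \<forall>s w. R < s \<longrightarrow> w \<in> level T b s \<longrightarrow> u s w = 0)"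

text \<open>Integral over Gamma w.r.t. arc length of a non-negative function F:
 integral over s > 0 of the sum of F over the finitely many points at distance s.\<close>
definition tree_int :: "(nat \<Rightarrow> ereal) \<Rightarrow> (nat \<Rightarrow> nat) \<Rightarrow> (real \<Rightarrow> nat list \<Rightarrow> real) \<Rightarrow> ennreal" where
  "tree_int T b F = (\<integral>\<^sup>+ s\<in>{0<..}. ennreal (\<Sum>w\<in>level T b s. F s w) \<partial>lborel)"

definition Mconst :: "(nat \<Rightarrow> ereal) \<Rightarrow> (nat \<Rightarrow> nat) \<Rightarrow> (real \<Rightarrow> real) \<Rightarrow> ennreal" where
  "Mconst T b \<psi> = (SUP t\<in>{0<..}.
      (\<integral>\<^sup>+ s\<in>{0<..t}. ennreal (\<psi> s * g0 T b s) \<partial>lborel)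
    * (\<integral>\<^sup>+ s\<in>{t<..}. ennreal (1 / g0 T b s) \<partial>lborel))"

definition hardy_ineq :: "(nat \<Rightarrow> ereal) \<Rightarrow> (nat \<Rightarrow> nat) \<Rightarrow> (real \<Rightarrow> real) \<Rightarrow> ennreal \<Rightarrow> bool" where
  "hardy_ineq T b \<psi> C \<longleftrightarrow> (\<forall>u. C0inf T b u \<longrightarrow>
      tree_int T b (\<lambda>s w. \<psi> s * (u s w)\<^sup>2)
        \<le> C * tree_int T b (\<lambda>s w. (deriv (\<lambda>r. u r w) s)\<^sup>2))"

definition sharp_const :: "(nat \<Rightarrow> ereal) \<Rightarrow> (nat \<Rightarrow> nat) \<Rightarrow> (real \<Rightarrow> real) \<Rightarrow> ennreal" where
  "sharp_const T b \<psi> = Inf {C. hardy_ineq T b \<psi> C}"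

end

theory Submission
  imports Defs "HOL-Computational_Algebra.Polynomial"
begin

text \<open>
  Let \<open>V s\<close> be the integral of \<open>1 / g0\<close> over \<open>(s, \<infinity>)\<close>, the reduced height of the part of
  the tree beyond distance \<open>s\<close>.  For the upper bound, the mean \<open>\<Phi> s\<close> of \<open>u\<^sup>2\<close> over the sphere
  \<open>|x| = s\<close> satisfies \<open>sqrt (\<Phi> s) \<le> \<integral>\<^sub>s\<^sup>\<infinity> \<kappa>\<close>, where \<open>g0 \<kappa>\<^sup>2\<close> is the sum of \<open>u'\<^sup>2\<close> over the
  sphere: along an edge this is Cauchy--Schwarz over the points of the sphere, and at a vertex the
  mean does not jump because all outgoing edges start from the vertex value.  This reduces the
  problem to the weighted inequality \<open>\<integral>\<^sub>0\<^sup>\<infinity> \<psi> g0 (\<integral>\<^sub>s\<^sup>\<infinity> \<kappa>)\<^sup>2 \<le> 4 M \<integral>\<^sub>0\<^sup>\<infinity> g0 \<kappa>\<^sup>2\<close> on the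
  half-line, which follows from Cauchy--Schwarz with the weight \<open>sqrt V\<close> and the substitution
  \<open>y = V s\<close>.  For the lower bound at \<open>\<tau>\<close>, the inequality is tested on radial functions close
  to \<open>min (V \<tau>) (V |x|) - V (t K)\<close>: their energy is at most their value at the root, and letting
  the approximation sharpen and \<open>K \<rightarrow> \<infinity>\<close> gives \<open>(\<integral>\<^sub>0\<^sup>\<tau> \<psi> g0) V \<tau> \<le> C\<close>.
\<close>

lemma emeasure_lborel_Ioi: "emeasure lborel {a<..} = (\<infinity>::ennreal)" for a :: real
proof (rule ccontr)
  assume "emeasure lborel {a<..} \<noteq> \<infinity>"
  then obtain n where n: "emeasure lborel {a<..} < of_nat n"
    using ennreal_Ex_less_of_nat by (auto simp: less_top)
  have "emeasure lborel {a<..a + real n} \<le> emeasure lborel {a<..}"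
    by (rule emeasure_mono) auto
  with n show False by (simp add: ennreal_of_nat_eq_real_of_nat)
qed

lemma nn_integral_Ioo_fundamental:
  fixes F f :: "real \<Rightarrow> real"
  assumes "a \<le> b" and "finite S" and "continuous_on {a..b} F"
    and der: "\<And>x. x \<in> {a<..<b} - S \<Longrightarrow> (F has_real_derivative f x) (at x)"
    and nonneg: "\<And>x. x \<in> {a<..<b} \<Longrightarrow> 0 \<le> f x"
  shows "(\<integral>\<^sup>+x. ennreal (f x) * indicator {a<..<b} x \<partial>lborel) = ennreal (F b - F a)"
proof -
  define f' where "f' x = (if x \<in> {a<..<b} then f x else 0)" for x
  have "(f' has_integral (F b - F a)) {a..b}"
  proof (rule fundamental_theorem_of_calculus_interior_strong[OF assms(2,1) _ assms(3)])
    fix x assume x: "x \<in> {a<..<b} - S"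
    then show "(F has_vector_derivative f' x) (at x)"
      using der[OF x] by (simp add: f'_def has_real_derivative_iff_has_vector_derivative)
  qed
  then have "(\<integral>\<^sup>+x. ennreal (f' x) * indicator {a..b} x \<partial>lborel) = ennreal (F b - F a)"
    by (rule nn_integral_has_integral_lebesgue'[rotated]) (use nonneg in \<open>auto simp: f'_def\<close>)
  moreover have "(\<lambda>x. ennreal (f' x) * indicator {a..b} x) = (\<lambda>x. ennreal (f x) * indicator {a<..<b} x)"
    by (auto simp: f'_def indicator_def fun_eq_iff)
  ultimately show ?thesis by simp
qed

lemma nn_integral_Ioo_eq_integral:
  fixes f :: "real \<Rightarrow> real"
  assumes "continuous_on {a..c} f" and "\<And>x. 0 \<le> f x"
  shows "(\<integral>\<^sup>+x. ennreal (f x) * indicator {a<..<c} x \<partial>lborel) = ennreal (integral {a..c} f)"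
proof -
  have "(\<integral>\<^sup>+x. ennreal (f x) * indicator {a<..<c} x \<partial>lborel) = (\<integral>\<^sup>+x. ennreal (f x) * indicator {a..c} x \<partial>lborel)"
    using AE_lborel_singleton[of a] AE_lborel_singleton[of c]
    by (intro nn_integral_cong_AE) (auto simp: indicator_def)
  also have "\<dots> = ennreal (integral {a..c} f)"
    using assms by (intro nn_integral_has_integral_lebesgue' integrable_integral integrable_continuous_real)
  finally show ?thesis .
qed

lemma measurable_indicator_less:
  fixes g :: "real \<Rightarrow> ennreal"
  assumes [measurable]: "g \<in> borel_measurable borel"
  shows "(\<lambda>(s, r). g r * indicator {s<..} r) \<in> borel_measurable (lborel \<Otimes>\<^sub>M lborel)"
proof -
  have "(\<lambda>(s, r). g r * indicator {s<..} r) = (\<lambda>(s::real, r::real). g r * (if s < r then 1 else 0))"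
    by (auto simp: indicator_def fun_eq_iff)
  also have "\<dots> \<in> borel_measurable (lborel \<Otimes>\<^sub>M lborel)" by measurable
  finally show ?thesis .
qed

lemma measurable_nn_integral_Ioi:
  fixes g :: "real \<Rightarrow> ennreal"
  assumes "g \<in> borel_measurable borel"
  shows "(\<lambda>s. \<integral>\<^sup>+r. g r * indicator {s<..} r \<partial>lborel) \<in> borel_measurable borel"
  using lborel.borel_measurable_nn_integral[OF measurable_indicator_less[OF assms]] by simp

lemma nn_integral_swap_Ioi:
  fixes f g :: "real \<Rightarrow> ennreal"
  assumes [measurable]: "f \<in> borel_measurable borel" "g \<in> borel_measurable borel"
  shows "(\<integral>\<^sup>+s. f s * (\<integral>\<^sup>+r. g r * indicator {s<..} r \<partial>lborel) \<partial>lborel)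
       = (\<integral>\<^sup>+r. g r * (\<integral>\<^sup>+s. f s * indicator {..<r} s \<partial>lborel) \<partial>lborel)"
proof -
  have [measurable]: "(\<lambda>(s, r). g r * indicator {s<..} r) \<in> borel_measurable (lborel \<Otimes>\<^sub>M lborel)"
    by (rule measurable_indicator_less) simp
  have "(\<integral>\<^sup>+s. f s * (\<integral>\<^sup>+r. g r * indicator {s<..} r \<partial>lborel) \<partial>lborel)
      = (\<integral>\<^sup>+s. (\<integral>\<^sup>+r. f s * (g r * indicator {s<..} r) \<partial>lborel) \<partial>lborel)"
    by (intro nn_integral_cong nn_integral_cmult[symmetric]) measurable
  also have "\<dots> = (\<integral>\<^sup>+r. (\<integral>\<^sup>+s. f s * (g r * indicator {s<..} r) \<partial>lborel) \<partial>lborel)"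
    by (rule lborel_pair.Fubini'[symmetric]) measurable
  also have "\<dots> = (\<integral>\<^sup>+r. (\<integral>\<^sup>+s. g r * (f s * indicator {..<r} s) \<partial>lborel) \<partial>lborel)"
    by (intro nn_integral_cong) (simp add: indicator_def mult_ac)
  also have "\<dots> = (\<integral>\<^sup>+r. g r * (\<integral>\<^sup>+s. f s * indicator {..<r} s \<partial>lborel) \<partial>lborel)"
    by (intro nn_integral_cong nn_integral_cmult) measurable
  finally show ?thesis .
qed

lemma nn_integral_Ioi_le_of_Ioo_le:
  fixes f :: "real \<Rightarrow> ennreal"
  assumes [measurable]: "f \<in> borel_measurable borel"
    and le: "\<And>c. a < c \<Longrightarrow> (\<integral>\<^sup>+x. f x * indicator {a<..<c} x \<partial>lborel) \<le> C"
  shows "(\<integral>\<^sup>+x. f x * indicator {a<..} x \<partial>lborel) \<le> C"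
proof -
  have "(\<lambda>x. f x * indicator {a<..} x) = (\<lambda>x. SUP n. f x * indicator {a<..<a + real (Suc n)} x)"
  proof
    fix x :: real
    obtain n :: nat where "x - a < real n" using reals_Archimedean2 by blast
    then have "x - a < real (Suc n)" by simp
    then show "f x * indicator {a<..} x = (SUP n. f x * indicator {a<..<a + real (Suc n)} x)"
      by (intro antisym SUP_upper2[of n] SUP_least) (auto simp: indicator_def)
  qed
  then have "(\<integral>\<^sup>+x. f x * indicator {a<..} x \<partial>lborel)
      = (SUP n. (\<integral>\<^sup>+x. f x * indicator {a<..<a + real (Suc n)} x \<partial>lborel))"
    by (simp only:) (intro nn_integral_monotone_convergence_SUP incseq_SucI le_funI,
        auto simp: indicator_def)
  also have "\<dots> \<le> C" by (intro SUP_least le) simp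
  finally show ?thesis .
qed

lemma ennreal_sq_le_of_forall_le:
  fixes q A :: ennreal and c :: real
  assumes c: "0 < c" and le: "\<And>l. 0 < l \<Longrightarrow> q \<le> ennreal (l / 2) * A + ennreal (c / l)"
  shows "q ^ 2 \<le> ennreal (2 * c) * A"
proof (cases A)
  case (real \<alpha>)
  show ?thesis
  proof (cases "\<alpha> = 0")
    case True
    have "q \<le> 0 + ennreal e" if "0 < e" for e
      using le[of "c / e"] real True c that by simp
    then have "q = 0" by (metis ennreal_le_epsilon le_zero_eq)
    then show ?thesis by simp
  next
    case False
    with real have \<alpha>: "0 < \<alpha>" by simp
    define S where "S = sqrt (2 * c * \<alpha>)"
    have S: "0 < S" "S\<^sup>2 = 2 * c * \<alpha>" using c \<alpha> by (simp_all add: S_def)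
    have "(S / \<alpha>) / 2 * \<alpha> + c / (S / \<alpha>) = S"
      using \<alpha> S by (simp add: field_simps power2_eq_square)
    moreover have "ennreal ((S / \<alpha>) / 2) * A = ennreal ((S / \<alpha>) / 2 * \<alpha>)"
      unfolding real by (rule ennreal_mult[symmetric]) (use \<alpha> S in auto)
    then have "q \<le> ennreal ((S / \<alpha>) / 2 * \<alpha>) + ennreal (c / (S / \<alpha>))"
      using le[of "S / \<alpha>"] S \<alpha> by simp
    ultimately have "q \<le> ennreal S"
      using S \<alpha> c by (simp add: ennreal_plus[symmetric] del: ennreal_plus)
    then have "q ^ 2 \<le> ennreal S ^ 2" by (rule power_mono) simp
    also have "\<dots> = ennreal (2 * c) * A" using S c \<alpha> real by (simp add: ennreal_power ennreal_mult)
    finally show ?thesis .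
  qed
qed (use c in \<open>simp add: ennreal_mult_top\<close>)

lemma ennreal_le_amgm:
  fixes k :: ennreal and a l :: real
  assumes a: "0 < a" and l: "0 < l"
  shows "k \<le> ennreal (l / 2) * (ennreal a * k ^ 2) + ennreal (1 / (2 * l * a))"
proof (cases k)
  case top
  then show ?thesis using a l by (simp add: ennreal_mult_top ennreal_top_mult)
next
  case (real x)
  have "x \<le> l / 2 * (a * x ^ 2) + 1 / (2 * l * a)"
  proof -
    have "0 \<le> (l * a * x - 1) ^ 2" by simp
    then have "2 * l * a * x \<le> (l * a * x) ^ 2 + 1" by (simp add: power2_eq_square algebra_simps)
    then have "x \<le> ((l * a * x) ^ 2 + 1) / (2 * l * a)" using a l by (simp add: field_simps)
    also have "((l * a * x) ^ 2 + 1) / (2 * l * a) = l / 2 * (a * x ^ 2) + 1 / (2 * l * a)"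
      using a l by (simp add: field_simps power2_eq_square)
    finally show ?thesis .
  qed
  then have "ennreal x \<le> ennreal (l / 2 * (a * x ^ 2) + 1 / (2 * l * a))" by (rule ennreal_leI)
  also have "\<dots> = ennreal (l / 2 * (a * x ^ 2)) + ennreal (1 / (2 * l * a))"
    by (rule ennreal_plus) (use a l real in auto)
  also have "ennreal (l / 2 * (a * x ^ 2)) = ennreal (l / 2) * ennreal (a * x ^ 2)"
    by (rule ennreal_mult) (use a l in auto)
  also have "ennreal (a * x ^ 2) = ennreal a * ennreal (x ^ 2)"
    by (rule ennreal_mult) (use a in auto)
  also have "ennreal (x ^ 2) = ennreal x ^ 2" using real by (simp add: ennreal_power)
  finally show ?thesis using real by simp
qed

lemma ennreal_le_divide_of_mult_le:
  fixes X :: ennreal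
  assumes "X * ennreal v \<le> ennreal m" "0 < v"
  shows "X \<le> ennreal (m / v)"
proof (cases X)
  case top
  then show ?thesis using assms by (simp add: ennreal_top_mult top_unique)
next
  case (real x)
  then have "ennreal (x * v) \<le> ennreal m" using assms by (simp add: ennreal_mult)
  then have "x = 0 \<or> x * v \<le> m" using real assms by (auto simp: ennreal_le_iff2 mult_le_0_iff)
  then show ?thesis using real assms by (auto simp: field_simps intro: ennreal_leI)
qed

lemma sqrt_le_of_forall_sqrt_add_le:
  fixes x q :: real
  assumes "0 \<le> x" and le: "\<And>e. 0 < e \<Longrightarrow> sqrt (x + e) \<le> sqrt e + q"
  shows "sqrt x \<le> q"
proof (rule tendsto_upperbound)
  have "((\<lambda>e. sqrt (x + e) - sqrt e) \<longlongrightarrow> sqrt (x + 0) - sqrt 0) (at_right 0)"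
    by (intro tendsto_intros)
  then show "((\<lambda>e. sqrt (x + e) - sqrt e) \<longlongrightarrow> sqrt x) (at_right 0)" by simp
  show "\<forall>\<^sub>F e in at_right 0. sqrt (x + e) - sqrt e \<le> q"
    using eventually_at_right_less[of 0] by eventually_elim (use le in \<open>simp add: algebra_simps\<close>)
qed (rule trivial_limit_at_right_real)

lemma abs_sum_mult_div_le:
  fixes f f' :: "'a \<Rightarrow> real"
  assumes g: "0 < g" and p: "0 < p" and bound: "(\<Sum>i\<in>A. (f i)\<^sup>2) \<le> g * p\<^sup>2"
  shows "\<bar>\<Sum>i\<in>A. f i * f' i\<bar> / (g * p) \<le> sqrt ((\<Sum>i\<in>A. (f' i)\<^sup>2) / g)"
proof -
  have "\<bar>\<Sum>i\<in>A. f i * f' i\<bar> \<le> L2_set f A * L2_set f' A"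
    by (rule order_trans[OF sum_abs]) (simp add: abs_mult L2_set_mult_ineq)
  also have "L2_set f A \<le> sqrt (g * p\<^sup>2)"
    unfolding L2_set_def using bound by (rule real_sqrt_le_mono)
  also have "sqrt (g * p\<^sup>2) = sqrt g * p"
    using p by (simp add: real_sqrt_mult)
  finally have "\<bar>\<Sum>i\<in>A. f i * f' i\<bar> \<le> sqrt g * p * L2_set f' A"
    by (simp add: mult_right_mono)
  then have "\<bar>\<Sum>i\<in>A. f i * f' i\<bar> / (g * p) \<le> sqrt g * p * L2_set f' A / (g * p)"
    by (rule divide_right_mono) (use g p in simp)
  also have "\<dots> = L2_set f' A / sqrt g"
    using g p real_sqrt_mult_self[of g] by (simp add: field_simps)
  also have "\<dots> = sqrt ((\<Sum>i\<in>A. (f' i)\<^sup>2) / g)"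
    by (simp add: L2_set_def real_sqrt_divide)
  finally show ?thesis .
qed

lemma le_add_integral_of_deriv:
  fixes F F' k :: "real \<Rightarrow> real"
  assumes ac: "a \<le> c" and F: "\<And>x. (F has_real_derivative F' x) (at x)"
    and le: "\<And>x. - F' x \<le> k x" and k: "continuous_on {a..c} k"
  shows "F a \<le> F c + integral {a..c} k"
proof -
  have "((\<lambda>x. - F' x) has_integral (- F c) - (- F a)) {a..c}"
    using ac DERIV_minus[OF F]
    by (intro fundamental_theorem_of_calculus)
       (auto simp: has_real_derivative_iff_has_vector_derivative intro: has_vector_derivative_at_within)
  moreover have "(k has_integral integral {a..c} k) {a..c}"
    using k by (intro integrable_integral integrable_continuous_real)
  ultimately have "(- F c) - (- F a) \<le> integral {a..c} k" using le by (rule has_integral_le)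
  then show ?thesis by simp
qed

lemma nn_integral_Ioo_add_Ioi_le:
  fixes f :: "real \<Rightarrow> ennreal"
  assumes [measurable]: "f \<in> borel_measurable borel" and "a \<le> c"
  shows "(\<integral>\<^sup>+r. f r * indicator {a<..<c} r \<partial>lborel) + (\<integral>\<^sup>+r. f r * indicator {c<..} r \<partial>lborel)
    \<le> (\<integral>\<^sup>+r. f r * indicator {a<..} r \<partial>lborel)"
  using assms(2)
  by (subst nn_integral_add[symmetric]) (auto intro!: nn_integral_mono simp: indicator_def)

lemma borel_measurable_restrict_Ioi_indicator:
  fixes \<psi> :: "real \<Rightarrow> real"
  assumes "\<psi> \<in> borel_measurable (restrict_space borel {a<..})"
  shows "(\<lambda>s. \<psi> s * indicator {a<..} s) \<in> borel_measurable borel"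
  using assms by (subst (asm) borel_measurable_restrict_space_iff) (auto simp: mult.commute)

lemma le_of_forall_le_add_mult:
  fixes x C A :: real
  assumes le: "\<And>e. 0 < e \<Longrightarrow> x \<le> C + A * e" and A: "0 \<le> A"
  shows "x \<le> C"
proof (rule field_le_epsilon)
  fix e :: real assume e: "0 < e"
  have "A * (e / (A + 1)) \<le> e" using A e by (simp add: field_simps)
  then show "x \<le> C + e" using le[of "e / (A + 1)"] A e by simp
qed

subsection \<open>Smooth functions and the softplus function\<close>

lemma smooth_fun_has_derivative: "smooth_fun f \<Longrightarrow> (f has_real_derivative deriv f x) (at x)"
  using DERIV_deriv_iff_real_differentiable unfolding smooth_fun_def by (metis funpow_0)

lemma continuous_on_deriv_smooth_fun: "smooth_fun f \<Longrightarrow> continuous_on A (deriv f)"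
proof -
  assume "smooth_fun f"
  then have "\<forall>x. ((deriv ^^ 1) f) differentiable (at x)" unfolding smooth_fun_def by blast
  then show ?thesis by (simp add: differentiable_imp_continuous_within continuous_at_imp_continuous_on)
qed

lemma smooth_fun_by_derivs:
  assumes "D 0 = f" and D: "\<And>n x. (D n has_real_derivative D (Suc n) x) (at x)"
  shows "smooth_fun f"
proof -
  have "(deriv ^^ n) f = D n" for n
  proof (induction n)
    case (Suc n)
    have "deriv (D n) = D (Suc n)" by (rule ext) (rule DERIV_imp_deriv[OF D])
    with Suc show ?case by simp
  qed (simp add: assms(1))
  then show ?thesis using D unfolding smooth_fun_def real_differentiable_def by metis
qed

lemma smooth_fun_const: "smooth_fun (\<lambda>x. c)"
  by (rule smooth_fun_by_derivs[where D = "\<lambda>n. if n = 0 then (\<lambda>x. c) else (\<lambda>x. 0)"]) auto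

lemma smooth_fun_affine: "smooth_fun (\<lambda>x. a + c * x)"
  by (rule smooth_fun_by_derivs[where D = "\<lambda>n. if n = 0 then (\<lambda>x. a + c * x) else if n = 1 then (\<lambda>x. c) else (\<lambda>x. 0)"])
     (auto intro!: derivative_eq_intros)

definition logistic :: "real \<Rightarrow> real" where "logistic y = exp y / (1 + exp y)"

definition softplus :: "real \<Rightarrow> real" where "softplus y = ln (1 + exp y)"

lemma logistic_pos: "0 < logistic y"
  unfolding logistic_def by (simp add: add_pos_pos)

lemma logistic_le_1: "logistic y \<le> 1"
  unfolding logistic_def by (simp add: add_pos_pos)

lemma softplus_nonneg: "0 \<le> softplus y"
  unfolding softplus_def by simp

lemma softplus_ge: "y \<le> softplus y"
  unfolding softplus_def by (subst ln_ge_iff) (auto simp: add_pos_nonneg)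

lemma mono_softplus: "mono softplus"
  unfolding softplus_def by (intro monoI) (simp add: add_pos_pos)

lemma softplus_0: "softplus 0 = ln 2"
  unfolding softplus_def by simp

lemma softplus_has_derivative: "(softplus has_real_derivative logistic y) (at y)"
  unfolding softplus_def logistic_def
  by (rule derivative_eq_intros refl | simp add: add_pos_pos)+

lemma logistic_has_derivative: "(logistic has_real_derivative logistic y * (1 - logistic y)) (at y)"
proof -
  have "0 < 1 + exp y" by (simp add: add_pos_pos)
  then show ?thesis unfolding logistic_def
    by (auto intro!: derivative_eq_intros simp: field_simps power2_eq_square)
qed

text \<open>All derivatives of the logistic function are polynomials in it.\<close>

fun logistic_poly :: "nat \<Rightarrow> real poly" where
  "logistic_poly 0 = [:0, 1:]"
| "logistic_poly (Suc n) = pderiv (logistic_poly n) * [:0, 1, -1:]"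

lemma logistic_poly_has_derivative:
  "((\<lambda>y. poly (logistic_poly n) (logistic y)) has_real_derivative
      poly (logistic_poly (Suc n)) (logistic y)) (at y)"
  using DERIV_chain2[OF poly_DERIV logistic_has_derivative] by (simp add: algebra_simps)

lemma smooth_fun_softplus_affine: "smooth_fun (\<lambda>x. c - d * softplus (\<nu> * (x - \<tau>)))"
proof (rule smooth_fun_by_derivs[where D = "\<lambda>n. if n = 0 then (\<lambda>x. c - d * softplus (\<nu> * (x - \<tau>)))
          else (\<lambda>x. - d * \<nu> ^ n * poly (logistic_poly (n - 1)) (logistic (\<nu> * (x - \<tau>))))"])
  fix n x
  have inner: "((\<lambda>x. \<nu> * (x - \<tau>)) has_real_derivative \<nu>) (at x)"
    by (auto intro!: derivative_eq_intros)
  show "((if n = 0 then (\<lambda>x. c - d * softplus (\<nu> * (x - \<tau>)))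
          else (\<lambda>x. - d * \<nu> ^ n * poly (logistic_poly (n - 1)) (logistic (\<nu> * (x - \<tau>)))))
     has_real_derivative (if Suc n = 0 then (\<lambda>x. c - d * softplus (\<nu> * (x - \<tau>)))
          else (\<lambda>x. - d * \<nu> ^ Suc n * poly (logistic_poly (Suc n - 1)) (logistic (\<nu> * (x - \<tau>))))) x) (at x)"
  proof (cases n)
    case 0
    have "((\<lambda>x. c - d * softplus (\<nu> * (x - \<tau>))) has_real_derivative
        0 - d * (logistic (\<nu> * (x - \<tau>)) * \<nu>)) (at x)"
      by (intro DERIV_diff DERIV_const DERIV_cmult DERIV_chain2[OF softplus_has_derivative inner])
    then show ?thesis using 0 by (simp add: mult_ac)
  next
    case (Suc m)
    have "((\<lambda>x. - d * \<nu> ^ Suc m * poly (logistic_poly m) (logistic (\<nu> * (x - \<tau>)))) has_real_derivative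
        - d * \<nu> ^ Suc m * (poly (logistic_poly (Suc m)) (logistic (\<nu> * (x - \<tau>))) * \<nu>)) (at x)"
      by (intro DERIV_cmult DERIV_chain2[OF logistic_poly_has_derivative inner])
    then show ?thesis using Suc by (simp add: mult_ac)
  qed
qed simp

definition soft_ramp :: "real \<Rightarrow> real \<Rightarrow> real \<Rightarrow> real" where
  "soft_ramp \<nu> \<tau> x = softplus (\<nu> * (x - \<tau>)) / \<nu>"

lemma soft_ramp_mono: "0 < \<nu> \<Longrightarrow> x \<le> y \<Longrightarrow> soft_ramp \<nu> \<tau> x \<le> soft_ramp \<nu> \<tau> y"
  unfolding soft_ramp_def by (intro divide_right_mono monoD[OF mono_softplus]) auto

lemma soft_ramp_nonneg: "0 < \<nu> \<Longrightarrow> 0 \<le> soft_ramp \<nu> \<tau> x"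
  unfolding soft_ramp_def by (simp add: softplus_nonneg)

lemma soft_ramp_ge: "0 < \<nu> \<Longrightarrow> x - \<tau> \<le> soft_ramp \<nu> \<tau> x"
  using softplus_ge[of "\<nu> * (x - \<tau>)"] unfolding soft_ramp_def by (simp add: field_simps)

lemma soft_ramp_center: "soft_ramp \<nu> \<tau> \<tau> = ln 2 / \<nu>"
  unfolding soft_ramp_def by (simp add: softplus_0)

lemma soft_ramp_has_derivative:
  assumes "0 < \<nu>"
  shows "(soft_ramp \<nu> \<tau> has_real_derivative logistic (\<nu> * (x - \<tau>))) (at x)"
proof -
  have "((\<lambda>x. \<nu> * (x - \<tau>)) has_real_derivative \<nu>) (at x)" by (auto intro!: derivative_eq_intros)
  from DERIV_cdivide[OF DERIV_chain2[OF softplus_has_derivative this], of \<nu>]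
  show ?thesis using assms by (simp add: soft_ramp_def[abs_def])
qed

section \<open>Regular trees of finite reduced height\<close>

definition words :: "(nat \<Rightarrow> nat) \<Rightarrow> nat \<Rightarrow> nat list set" where
  "words b n = {w. length w = n \<and> (\<forall>i<n. w ! i < b i)}"

lemma words_Suc: "words b (Suc n) = (\<lambda>(v, i). v @ [i]) ` (words b n \<times> {..<b n})"
proof
  show "words b (Suc n) \<subseteq> (\<lambda>(v, i). v @ [i]) ` (words b n \<times> {..<b n})"
  proof
    fix w assume w: "w \<in> words b (Suc n)"
    then obtain v i where "w = v @ [i]" by (cases w rule: rev_cases) (auto simp: words_def)
    with w show "w \<in> (\<lambda>(v, i). v @ [i]) ` (words b n \<times> {..<b n})"
      by (force simp: words_def nth_append less_Suc_eq)
  qed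
qed (auto simp: words_def nth_append less_Suc_eq)

lemma card_words: "card (words b n) = (\<Prod>i<n. b i)"
proof (induction n)
  case 0
  have "words b 0 = {[]}" by (auto simp: words_def)
  then show ?case by simp
next
  case (Suc n)
  have "inj_on (\<lambda>(v, i). v @ [i]) (words b n \<times> {..<b n})" by (auto simp: inj_on_def)
  with Suc show ?case by (simp add: words_Suc card_image card_cartesian_product)
qed

lemma butlast_words: "w \<in> words b (Suc n) \<Longrightarrow> butlast w \<in> words b n"
  by (auto simp: words_def nth_butlast)

locale frh_tree =
  fixes T :: "nat \<Rightarrow> ereal" and b :: "nat \<Rightarrow> nat"
  assumes reg_tree: "reg_tree T b"
    and height_infinite: "(SUP k. T k) = \<infinity>"
    and reduced_height_finite: "(\<integral>\<^sup>+ s\<in>{0<..}. ennreal (1 / g0 T b s) \<partial>lborel) < \<infinity>"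
begin

lemma b_ge_1: "T i < \<infinity> \<Longrightarrow> 1 \<le> b i"
  using reg_tree by (cases i) (auto simp: reg_tree_def)

lemma T_infinite_mono: "T k = \<infinity> \<Longrightarrow> k \<le> j \<Longrightarrow> T j = \<infinity>"
  using reg_tree by (induction j) (auto simp: le_Suc_eq reg_tree_def)

lemma g0_ge_1: "1 \<le> g0 T b s"
proof -
  have "1 \<le> b i" if "T i < ereal s" for i
    by (intro b_ge_1 order.strict_trans[OF that]) simp
  then show ?thesis unfolding g0_def by (intro prod_ge_1) simp
qed

text \<open>If generation \<open>k\<close> is missing, \<open>g0\<close> is bounded and the reduced height is infinite.\<close>

lemma T_finite: "T k < \<infinity>"
proof (rule ccontr)
  assume "\<not> T k < \<infinity>"
  then have "T k = \<infinity>" by (cases "T k") auto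
  then have sub: "{i. T i < ereal s} \<subseteq> {..<k}" for s
  proof (intro subsetI)
    fix i assume "i \<in> {i. T i < ereal s}"
    then have "T i \<noteq> \<infinity>" by auto
    with \<open>T k = \<infinity>\<close> show "i \<in> {..<k}" using T_infinite_mono[of k i] by (cases "k \<le> i") auto
  qed
  have "g0 T b s \<le> (\<Prod>i<k. real (b i) + 1)" for s
  proof -
    have "g0 T b s \<le> (\<Prod>i\<in>{i. T i < ereal s}. real (b i) + 1)"
      unfolding g0_def by (rule prod_mono) simp
    also have "\<dots> \<le> (\<Prod>i<k. real (b i) + 1)"
      by (rule prod_mono2) (use sub in auto)
    finally show ?thesis .
  qed
  then have "ennreal (1 / (\<Prod>i<k. real (b i) + 1)) * indicator {0<..} s
      \<le> ennreal (1 / g0 T b s) * indicator {0<..} s" for s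
    using g0_ge_1[of s] by (auto simp: indicator_def intro!: ennreal_leI frac_le)
  then have "(\<integral>\<^sup>+s. ennreal (1 / (\<Prod>i<k. real (b i) + 1)) * indicator {0<..} (s::real) \<partial>lborel)
      \<le> (\<integral>\<^sup>+ s\<in>{0<..}. ennreal (1 / g0 T b s) \<partial>lborel)"
    by (intro nn_integral_mono)
  moreover have "0 < (\<Prod>i<k. real (b i) + 1)" by (intro prod_pos) auto
  ultimately show False
    using reduced_height_finite by (simp add: nn_integral_cmult_indicator emeasure_lborel_Ioi ennreal_mult_top)
qed

lemma T_nonneg: "0 \<le> T k"
proof (induction k)
  case (Suc k)
  have "T k < T (Suc k)" using reg_tree T_finite[of k] by (simp add: reg_tree_def)
  with Suc show ?case by simp
qed (use reg_tree in \<open>simp add: reg_tree_def\<close>)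

definition t :: "nat \<Rightarrow> real" where "t k = real_of_ereal (T k)"

lemma T_eq_t: "T k = ereal (t k)"
  using T_finite[of k] T_nonneg[of k] unfolding t_def by (cases "T k") auto

lemma t_0: "t 0 = 0"
  using reg_tree by (simp add: t_def reg_tree_def)

lemma strict_mono_t: "strict_mono t"
  using reg_tree T_finite by (simp add: strict_mono_Suc_iff reg_tree_def T_eq_t)

lemma t_less_iff: "t i < t j \<longleftrightarrow> i < j"
  using strict_mono_t by (simp add: strict_mono_less)

lemma t_le_iff: "t i \<le> t j \<longleftrightarrow> i \<le> j"
  using strict_mono_t by (simp add: strict_mono_less_eq)

lemma t_less_Suc: "t k < t (Suc k)"
  by (simp add: t_less_iff)

lemma t_nonneg: "0 \<le> t k"
  using t_le_iff[of 0 k] t_0 by simp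

lemma t_unbounded: "\<exists>k. R < t k"
proof (rule ccontr)
  assume "\<nexists>k. R < t k"
  then have "(SUP k. T k) \<le> ereal R" by (auto intro!: SUP_least simp: T_eq_t not_less)
  with height_infinite show False by simp
qed

lemma b_pos: "0 < b k"
  using b_ge_1[OF T_finite[of k]] by simp

lemma ex_edge_Ioc:
  assumes "0 < s" obtains k where "t k < s" "s \<le> t (Suc k)"
proof -
  define N where "N = (LEAST N. s \<le> t N)"
  have N: "s \<le> t N" unfolding N_def using t_unbounded[of s] by (auto intro: LeastI2 less_imp_le)
  with assms t_0 obtain k where k: "N = Suc k" by (cases N) auto
  then have "\<not> s \<le> t k" using not_less_Least[of k "\<lambda>N. s \<le> t N"] by (simp add: N_def)
  with N k show ?thesis by (intro that) auto
qed

lemma ex_edge_Ico: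
  assumes "0 \<le> x" obtains k where "t k \<le> x" "x < t (Suc k)"
proof -
  define N where "N = (LEAST N. x < t N)"
  have N: "x < t N" unfolding N_def using t_unbounded[of x] by (auto intro: LeastI2)
  with assms t_0 obtain k where k: "N = Suc k" by (cases N) auto
  then have "\<not> x < t k" using not_less_Least[of k "\<lambda>N. x < t N"] by (simp add: N_def)
  with N k show ?thesis by (intro that) auto
qed

lemma edge_unique: "t k < s \<Longrightarrow> s \<le> t (Suc k) \<Longrightarrow> t j < s \<Longrightarrow> s \<le> t (Suc j) \<Longrightarrow> j = k"
  using t_less_iff[of k "Suc j"] t_less_iff[of j "Suc k"] by simp

lemma not_vertex: "t k < x \<Longrightarrow> x < t (Suc k) \<Longrightarrow> x \<notin> range t"
  by (auto simp: t_less_iff)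

lemma ex_open_edge:
  assumes "0 < x" "x \<notin> range t" obtains k where "t k < x" "x < t (Suc k)"
  using ex_edge_Ioc[OF assms(1)] assms(2) by (metis order_le_imp_less_or_eq rangeI)

lemma finite_vertices_below: "finite (range t \<inter> {..c})"
proof -
  obtain N where "c < t N" using t_unbounded by blast
  then have "range t \<inter> {..c} \<subseteq> t ` {..N}" by (auto simp: t_le_iff[symmetric])
  then show ?thesis by (rule finite_subset) simp
qed

definition g :: "nat \<Rightarrow> real" where "g k = (\<Prod>i<Suc k. real (b i))"

lemma g_ge_1: "1 \<le> g k"
  unfolding g_def using b_pos by (intro prod_ge_1) (simp add: Suc_le_eq)

lemma g_pos: "0 < g k"
  using g_ge_1[of k] by simp

lemma g_Suc: "g (Suc k) = g k * real (b (Suc k))"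
  by (simp add: g_def)

lemma vertices_below_edge:
  assumes "t k < s" "s \<le> t (Suc k)"
  shows "{i. T i < ereal s} = {..k}"
proof -
  have "T i < ereal s \<longleftrightarrow> i \<le> k" for i
    using assms t_less_iff[of i "Suc k"] t_le_iff[of i k] by (auto simp: T_eq_t)
  then show ?thesis by auto
qed

lemma g0_edge: "t k < s \<Longrightarrow> s \<le> t (Suc k) \<Longrightarrow> g0 T b s = g k"
  by (simp add: g0_def g_def vertices_below_edge lessThan_Suc_atMost)

lemma g0_nonpos:
  assumes "s \<le> 0" shows "g0 T b s = 1"
proof -
  have "\<not> T i < ereal s" for i using t_nonneg[of i] assms by (simp add: T_eq_t)
  then show ?thesis by (simp add: g0_def)
qed

lemma g0_pos: "0 < g0 T b s"
  using g0_ge_1[of s] by simp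

lemma mono_g0: "mono (g0 T b)"
proof
  fix x y :: real assume xy: "x \<le> y"
  show "g0 T b x \<le> g0 T b y"
  proof (cases "x \<le> 0")
    case True then show ?thesis using g0_ge_1 by (simp add: g0_nonpos)
  next
    case False
    then obtain i j where i: "t i < x" "x \<le> t (Suc i)" and j: "t j < y" "y \<le> t (Suc j)"
      using ex_edge_Ioc[of x] ex_edge_Ioc[of y] xy by (metis not_le order_less_le_trans)
    then have "i \<le> j" using xy t_less_iff[of i "Suc j"] by simp
    then show ?thesis
      using i j b_pos unfolding g0_edge[OF i] g0_edge[OF j] g_def
      by (intro prod_mono2) (auto simp: Suc_le_eq)
  qed
qed

lemma g0_measurable[measurable]: "g0 T b \<in> borel_measurable borel"
  using mono_g0 by (rule borel_measurable_mono)

lemma level_edge: "t k < s \<Longrightarrow> s \<le> t (Suc k) \<Longrightarrow> level T b s = words b (Suc k)"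
  by (auto simp: level_def words_def vertices_below_edge)

lemma card_edge_words: "real (card (words b (Suc k))) = g k"
  by (simp add: card_words g_def)

lemma card_level: "0 < s \<Longrightarrow> real (card (level T b s)) = g0 T b s"
  by (metis ex_edge_Ioc level_edge g0_edge card_edge_words)

section \<open>The reduced height of the tail\<close>

lemma inverse_g0_le_1: "1 / g0 T b x \<le> 1"
  using g0_ge_1[of x] by simp

lemma nn_integral_Ioi_inverse_g0_finite: "(\<integral>\<^sup>+x\<in>{s<..}. ennreal (1 / g0 T b x) \<partial>lborel) < \<infinity>"
proof -
  have "(\<integral>\<^sup>+x\<in>{s<..}. ennreal (1 / g0 T b x) \<partial>lborel) \<le>
      (\<integral>\<^sup>+x. indicator {min s 0<..0} x + ennreal (1 / g0 T b x) * indicator {0<..} x \<partial>lborel)"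
    using inverse_g0_le_1 by (intro nn_integral_mono) (auto simp: indicator_def)
  also have "\<dots> = (\<integral>\<^sup>+x. indicator {min s 0<..0} x \<partial>lborel)
      + (\<integral>\<^sup>+x\<in>{0<..}. ennreal (1 / g0 T b x) \<partial>lborel)"
    by (rule nn_integral_add) auto
  also have "\<dots> < \<infinity>" using reduced_height_finite by (simp add: less_top)
  finally show ?thesis .
qed

definition V :: "real \<Rightarrow> real" where
  "V s = enn2real (\<integral>\<^sup>+x\<in>{s<..}. ennreal (1 / g0 T b x) \<partial>lborel)"

lemma V_eq: "(\<integral>\<^sup>+x\<in>{s<..}. ennreal (1 / g0 T b x) \<partial>lborel) = ennreal (V s)"
  unfolding V_def using nn_integral_Ioi_inverse_g0_finite by (simp add: less_top)

lemma V_nonneg [simp]: "0 \<le> V s"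
  by (simp add: V_def)

lemma V_split:
  assumes "x \<le> y"
  shows "ennreal (V x) = (\<integral>\<^sup>+z\<in>{x<..y}. ennreal (1 / g0 T b z) \<partial>lborel) + ennreal (V y)"
proof -
  have "ennreal (V x) = (\<integral>\<^sup>+z. ennreal (1 / g0 T b z) * indicator {x<..y} z
      + ennreal (1 / g0 T b z) * indicator {y<..} z \<partial>lborel)"
    using assms by (subst V_eq[symmetric]) (auto intro!: nn_integral_cong simp: indicator_def)
  also have "\<dots> = (\<integral>\<^sup>+z\<in>{x<..y}. ennreal (1 / g0 T b z) \<partial>lborel) + ennreal (V y)"
    by (subst nn_integral_add) (auto simp: V_eq)
  finally show ?thesis .
qed

lemma antimono_V:
  assumes "x \<le> y" shows "V y \<le> V x"
proof -
  have "ennreal (V y) \<le> ennreal (V x)"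
    unfolding V_split[OF assms] by (rule add_increasing) simp_all
  then show ?thesis by (simp add: ennreal_le_iff)
qed

lemma nn_integral_Ioc_inverse_g0:
  assumes "x \<le> y"
  shows "(\<integral>\<^sup>+z\<in>{x<..y}. ennreal (1 / g0 T b z) \<partial>lborel) = ennreal (V x - V y)"
proof -
  have "(\<integral>\<^sup>+z\<in>{x<..y}. ennreal (1 / g0 T b z) \<partial>lborel) = ennreal (V x) - ennreal (V y)"
    unfolding V_split[OF assms] by simp
  then show ?thesis by (simp add: ennreal_minus)
qed

lemma V_measurable[measurable]: "V \<in> borel_measurable borel"
proof -
  have "mono (\<lambda>x. - V x)" by (intro monoI) (simp add: antimono_V)
  then have "(\<lambda>x. - V x) \<in> borel_measurable borel" by (rule borel_measurable_mono)
  then have "(\<lambda>x. - (- V x)) \<in> borel_measurable borel" by measurable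
  then show ?thesis by simp
qed

lemma V_edge:
  assumes "t k \<le> x" "x \<le> y" "y \<le> t (Suc k)"
  shows "V x = V y + (y - x) / g k"
proof -
  have "g0 T b z = g k" if "x < z" "z \<le> y" for z
    using assms that by (intro g0_edge) auto
  then have "ennreal (V x - V y) = (\<integral>\<^sup>+z. ennreal (1 / g k) * indicator {x<..y} z \<partial>lborel)"
    unfolding nn_integral_Ioc_inverse_g0[OF assms(2), symmetric]
    by (intro nn_integral_cong) (simp add: indicator_def)
  also have "\<dots> = ennreal ((y - x) / g k)"
    using assms g_pos[of k] by (simp add: nn_integral_cmult_indicator ennreal_mult[symmetric])
  finally show ?thesis
    using assms antimono_V[of x y] g_pos[of k] by (subst (asm) ennreal_inj) auto
qed

lemma V_diff_le: "x \<le> y \<Longrightarrow> V x - V y \<le> y - x"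
proof -
  assume xy: "x \<le> y"
  have "ennreal (V x - V y) \<le> (\<integral>\<^sup>+z. ennreal 1 * indicator {x<..y} z \<partial>lborel)"
    using inverse_g0_le_1 unfolding nn_integral_Ioc_inverse_g0[OF xy, symmetric]
    by (intro nn_integral_mono) (auto simp: indicator_def)
  with xy show ?thesis by (auto simp: nn_integral_cmult_indicator ennreal_le_iff2)
qed

lemma dist_V_le: "dist (V x) (V y) \<le> dist x y"
  using V_diff_le[of x y] V_diff_le[of y x] antimono_V[of x y] antimono_V[of y x]
  by (cases "x \<le> y") (auto simp: dist_real_def)

lemma continuous_on_V: "continuous_on A V"
proof (rule continuous_onI)
  fix x e :: real assume "0 < e"
  then show "\<exists>d>0. \<forall>y\<in>A. dist y x < d \<longrightarrow> dist (V y) (V x) \<le> e"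
    by (intro exI[of _ e]) (auto intro: order.trans[OF dist_V_le] less_imp_le)
qed

lemma V_pos: "0 < V x"
proof -
  obtain k where k: "t k \<le> max x 0" "max x 0 < t (Suc k)"
    using ex_edge_Ico[of "max x 0"] by auto
  then have "V (max x 0) = V (t (Suc k)) + (t (Suc k) - max x 0) / g k"
    by (intro V_edge) auto
  moreover have "0 < (t (Suc k) - max x 0) / g k" using k g_pos[of k] by simp
  ultimately show ?thesis using antimono_V[of x "max x 0"] V_nonneg[of "t (Suc k)"] by linarith
qed

lemma V_has_derivative:
  assumes x: "t k < x" "x < t (Suc k)"
  shows "(V has_real_derivative - 1 / g k) (at x)"
proof (rule has_field_derivative_transform_within_open)
  show "((\<lambda>y. V x - (y - x) / g k) has_real_derivative - 1 / g k) (at x)"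
    using g_pos[of k] by (auto intro!: derivative_eq_intros)
  show "V x - (y - x) / g k = V y" if "y \<in> {t k<..<t (Suc k)}" for y
    using that x V_edge[of k x y] V_edge[of k y x] g_pos[of k]
    by (cases "x \<le> y") (auto simp: field_simps)
qed (use x in auto)

lemma V_tendsto_0: "(V \<longlongrightarrow> 0) at_top"
proof (rule order_tendstoI)
  fix e :: real assume e: "0 < e"
  define f where "f n x = ennreal (1 / g0 T b x) * indicator {real n<..} x" for n x
  have "decseq f" by (intro decseq_SucI le_funI) (auto simp: f_def indicator_def)
  moreover have "f n \<in> borel_measurable borel" for n unfolding f_def[abs_def] by measurable
  moreover have "integral\<^sup>N lborel (f 0) < \<infinity>"
    using nn_integral_Ioi_inverse_g0_finite[of 0] by (simp add: f_def[abs_def])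
  ultimately have "(\<integral>\<^sup>+x. (INF n. f n x) \<partial>lborel) = (INF n. integral\<^sup>N lborel (f n))"
    by (intro nn_integral_monotone_convergence_INF_decseq) auto
  moreover have "(INF n. f n x) = 0" for x
  proof -
    obtain n :: nat where "x \<le> real n" using real_arch_simple by blast
    then show ?thesis by (intro antisym INF_lower2[of n]) (auto simp: f_def)
  qed
  ultimately have "(INF n. ennreal (V (real n))) < ennreal e"
    using e by (simp add: f_def[abs_def] V_eq)
  then obtain n where "ennreal (V (real n)) < ennreal e" by (auto simp: INF_less_iff)
  then have "V (real n) < e" by (simp add: ennreal_less_iff)
  then have "\<forall>x\<ge>real n. V x < e" using antimono_V le_less_trans by blast
  then show "\<forall>\<^sub>F x in at_top. V x < e" by (auto simp: eventually_at_top_linorder)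
next
  fix e :: real assume "e < 0"
  then show "\<forall>\<^sub>F x in at_top. e < V x" by (simp add: less_le_trans)
qed

section \<open>A weighted Hardy inequality on the half-line\<close>

lemma nn_integral_comp_V:
  fixes \<phi> \<phi>' :: "real \<Rightarrow> real"
  assumes ac: "0 \<le> a" "a \<le> c"
    and \<phi>: "\<And>y. 0 < y \<Longrightarrow> (\<phi> has_real_derivative \<phi>' y) (at y)"
    and nonneg: "\<And>y. 0 < y \<Longrightarrow> 0 \<le> \<phi>' y"
  shows "(\<integral>\<^sup>+x. ennreal (\<phi>' (V x) / g0 T b x) * indicator {a<..<c} x \<partial>lborel)
       = ennreal (\<phi> (V a) - \<phi> (V c))"
proof -
  have "continuous_on {0<..} \<phi>"
    using \<phi> by (intro continuous_at_imp_continuous_on ballI) (meson DERIV_isCont greaterThan_iff)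
  then have cont: "continuous_on {a..c} (\<lambda>x. \<phi> (V x))"
    using V_pos by (intro continuous_on_compose2[OF _ continuous_on_V]) auto
  have "(\<integral>\<^sup>+x. ennreal (\<phi>' (V x) / g0 T b x) * indicator {a<..<c} x \<partial>lborel)
      = ennreal ((- \<phi> (V c)) - (- \<phi> (V a)))"
  proof (rule nn_integral_Ioo_fundamental[OF ac(2) finite_vertices_below[of c]])
    show "continuous_on {a..c} (\<lambda>x. - \<phi> (V x))" using cont by (rule continuous_on_minus)
  next
    fix x assume x: "x \<in> {a<..<c} - range t \<inter> {..c}"
    then obtain k where k: "t k < x" "x < t (Suc k)" using ac ex_open_edge[of x] by auto
    have "((\<lambda>x. \<phi> (V x)) has_real_derivative \<phi>' (V x) * (- 1 / g k)) (at x)"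
      using DERIV_chain2[OF \<phi>[OF V_pos] V_has_derivative[OF k]] .
    then show "((\<lambda>x. - \<phi> (V x)) has_real_derivative \<phi>' (V x) / g0 T b x) (at x)"
      using g0_edge[of k x] k by (auto dest: DERIV_minus)
  next
    fix x show "0 \<le> \<phi>' (V x) / g0 T b x" using nonneg[OF V_pos] g0_pos[of x] by simp
  qed
  then show ?thesis by simp
qed

lemma nn_integral_inverse_sqrt_V_le:
  "(\<integral>\<^sup>+x. ennreal (inverse (sqrt (V x)) / g0 T b x) * indicator {s<..} x \<partial>lborel)
     \<le> ennreal (2 * sqrt (V s))" if "0 \<le> s"
proof (rule nn_integral_Ioi_le_of_Ioo_le)
  fix c assume "s < c"
  have "((\<lambda>y. 2 * sqrt y) has_real_derivative inverse (sqrt y)) (at y)" if "0 < y" for y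
    using DERIV_cmult[OF DERIV_real_sqrt[OF that], of 2] by simp
  with \<open>0 \<le> s\<close> \<open>s < c\<close>
  have "(\<integral>\<^sup>+x. ennreal (inverse (sqrt (V x)) / g0 T b x) * indicator {s<..<c} x \<partial>lborel)
      = ennreal (2 * sqrt (V s) - 2 * sqrt (V c))"
    by (intro nn_integral_comp_V) auto
  then show "(\<integral>\<^sup>+x. ennreal (inverse (sqrt (V x)) / g0 T b x) * indicator {s<..<c} x \<partial>lborel)
      \<le> ennreal (2 * sqrt (V s))"
    by (simp add: ennreal_leI)
qed measurable

lemma sqrt_V_eq:
  assumes "0 \<le> s" "s \<le> r"
  shows "ennreal (sqrt (V s)) = ennreal (sqrt (V r)) +
    (\<integral>\<^sup>+x. ennreal (inverse (sqrt (V x)) / 2 / g0 T b x) * indicator {s<..<r} x \<partial>lborel)"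
proof -
  have "(\<integral>\<^sup>+x. ennreal (inverse (sqrt (V x)) / 2 / g0 T b x) * indicator {s<..<r} x \<partial>lborel)
      = ennreal (sqrt (V s) - sqrt (V r))"
    using assms by (intro nn_integral_comp_V DERIV_real_sqrt) auto
  moreover have "sqrt (V r) \<le> sqrt (V s)" using antimono_V[OF assms(2)] by simp
  ultimately show ?thesis by (simp add: ennreal_plus[symmetric])
qed

text \<open>Cauchy--Schwarz with the weight \<open>sqrt V\<close>, whose reciprocal has a finite tail integral.\<close>

lemma sq_nn_integral_Ioi_le:
  fixes K :: "real \<Rightarrow> ennreal"
  assumes [measurable]: "K \<in> borel_measurable borel" and s: "0 \<le> s"
  shows "(\<integral>\<^sup>+r. K r * indicator {s<..} r \<partial>lborel) ^ 2
    \<le> ennreal (2 * sqrt (V s)) * (\<integral>\<^sup>+r. ennreal (g0 T b r * sqrt (V r)) * K r ^ 2 * indicator {s<..} r \<partial>lborel)"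
proof (rule ennreal_sq_le_of_forall_le)
  show "0 < sqrt (V s)" using V_pos[of s] by simp
  fix l :: real assume l: "0 < l"
  define A where "A = (\<integral>\<^sup>+r. ennreal (g0 T b r * sqrt (V r)) * K r ^ 2 * indicator {s<..} r \<partial>lborel)"
  define B where "B = (\<integral>\<^sup>+x. ennreal (inverse (sqrt (V x)) / g0 T b x) * indicator {s<..} x \<partial>lborel)"
  have amgm: "K r \<le> ennreal (l / 2) * (ennreal (g0 T b r * sqrt (V r)) * K r ^ 2)
      + ennreal (1 / (2 * l)) * ennreal (inverse (sqrt (V r)) / g0 T b r)" for r
  proof -
    have "0 < g0 T b r * sqrt (V r)" using V_pos[of r] g0_pos[of r] by simp
    from ennreal_le_amgm[OF this l, of "K r"]
    show ?thesis using l g0_pos[of r] by (simp add: ennreal_mult[symmetric] field_simps)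
  qed
  have "(\<integral>\<^sup>+r. K r * indicator {s<..} r \<partial>lborel) \<le>
      (\<integral>\<^sup>+r. ennreal (l / 2) * (ennreal (g0 T b r * sqrt (V r)) * K r ^ 2 * indicator {s<..} r)
        + ennreal (1 / (2 * l)) * (ennreal (inverse (sqrt (V r)) / g0 T b r) * indicator {s<..} r) \<partial>lborel)"
    using amgm by (intro nn_integral_mono) (auto simp: indicator_def)
  also have "\<dots> = ennreal (l / 2) * A + ennreal (1 / (2 * l)) * B"
    unfolding A_def B_def by (subst nn_integral_add) (auto simp: nn_integral_cmult)
  also have "ennreal (1 / (2 * l)) * B \<le> ennreal (1 / (2 * l)) * ennreal (2 * sqrt (V s))"
    unfolding B_def by (intro mult_left_mono nn_integral_inverse_sqrt_V_le s) simp
  also have "ennreal (1 / (2 * l)) * ennreal (2 * sqrt (V s)) = ennreal (sqrt (V s) / l)"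
    using l by (simp add: ennreal_mult[symmetric])
  finally show "(\<integral>\<^sup>+r. K r * indicator {s<..} r \<partial>lborel) \<le> ennreal (l / 2) * A + ennreal (sqrt (V s) / l)"
    by (simp add: add_left_mono)
qed

text \<open>The condition \<open>M(\<Gamma>, \<psi>) \<le> m\<close> of the paper, for a weight \<open>\<psi>\<close> on the whole real line.\<close>

definition M_bounded :: "(real \<Rightarrow> real) \<Rightarrow> real \<Rightarrow> bool" where
  "M_bounded \<psi> m \<longleftrightarrow> (\<forall>\<tau>>0.
     (\<integral>\<^sup>+s. ennreal (\<psi> s * g0 T b s) * indicator {0<..\<tau>} s \<partial>lborel) * ennreal (V \<tau>) \<le> ennreal m)"

lemma nn_integral_weight_le:
  assumes "M_bounded \<psi> m" "0 < \<tau>"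
  shows "(\<integral>\<^sup>+s. ennreal (\<psi> s * g0 T b s) * indicator {0<..<\<tau>} s \<partial>lborel) \<le> ennreal (m / V \<tau>)"
proof -
  have "(\<integral>\<^sup>+s. ennreal (\<psi> s * g0 T b s) * indicator {0<..<\<tau>} s \<partial>lborel)
      \<le> (\<integral>\<^sup>+s. ennreal (\<psi> s * g0 T b s) * indicator {0<..\<tau>} s \<partial>lborel)"
    by (intro nn_integral_mono) (auto simp: indicator_def)
  also have "\<dots> \<le> ennreal (m / V \<tau>)"
    using assms V_pos by (intro ennreal_le_divide_of_mult_le) (auto simp: M_bounded_def)
  finally show ?thesis .
qed

lemma nn_integral_inverse_V_sqrt_V:
  assumes "0 \<le> r"
  shows "(\<integral>\<^sup>+x. ennreal (inverse (V x * sqrt (V x)) / 2 / g0 T b x) * indicator {0<..<r} x \<partial>lborel)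
    = ennreal (inverse (sqrt (V r)) - inverse (sqrt (V 0)))"
proof -
  have "((\<lambda>y. - inverse (sqrt y)) has_real_derivative inverse (y * sqrt y) / 2) (at y)" if "0 < y" for y
    using DERIV_minus[OF DERIV_inverse_fun[OF DERIV_real_sqrt[OF that]]] that
    by (simp add: inverse_mult_distrib mult.commute)
  from nn_integral_comp_V[OF order_refl assms this]
  show ?thesis by simp
qed

lemma inverse_sqrt_V_mult_weight_le:
  assumes "M_bounded \<psi> m" "0 \<le> m" "0 < x"
  shows "ennreal (inverse (sqrt (V x)) / 2 / g0 T b x)
      * (\<integral>\<^sup>+s. ennreal (\<psi> s * g0 T b s) * indicator {0<..<x} s \<partial>lborel)
    \<le> ennreal m * ennreal (inverse (V x * sqrt (V x)) / 2 / g0 T b x)"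
proof -
  have "ennreal (inverse (sqrt (V x)) / 2 / g0 T b x)
      * (\<integral>\<^sup>+s. ennreal (\<psi> s * g0 T b s) * indicator {0<..<x} s \<partial>lborel)
    \<le> ennreal (inverse (sqrt (V x)) / 2 / g0 T b x) * ennreal (m / V x)"
    by (intro mult_left_mono nn_integral_weight_le assms) simp
  also have "\<dots> = ennreal m * ennreal (inverse (V x * sqrt (V x)) / 2 / g0 T b x)"
    using assms V_pos[of x] g0_pos[of x] by (simp add: ennreal_mult[symmetric] field_simps)
  finally show ?thesis .
qed

lemma nn_integral_weight_tail_le:
  fixes \<psi> :: "real \<Rightarrow> real"
  assumes [measurable]: "\<psi> \<in> borel_measurable borel"
    and M: "M_bounded \<psi> m" and m: "0 \<le> m" and r: "0 < r"
  shows "(\<integral>\<^sup>+s. ennreal (\<psi> s * g0 T b s) * indicator {0<..<r} s *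
      (\<integral>\<^sup>+x. ennreal (inverse (sqrt (V x)) / 2 / g0 T b x) * indicator {..<r} x * indicator {s<..} x \<partial>lborel)
      \<partial>lborel) \<le> ennreal (m / sqrt (V r))"
proof -
  define a where "a s = ennreal (\<psi> s * g0 T b s) * indicator {0<..<r} s" for s
  define \<kappa> where "\<kappa> x = ennreal (inverse (sqrt (V x)) / 2 / g0 T b x) * indicator {..<r} x" for x
  define \<kappa>' where "\<kappa>' x = ennreal (inverse (V x * sqrt (V x)) / 2 / g0 T b x)" for x
  have [measurable]: "a \<in> borel_measurable borel" "\<kappa> \<in> borel_measurable borel" "\<kappa>' \<in> borel_measurable borel"
    unfolding a_def[abs_def] \<kappa>_def[abs_def] \<kappa>'_def[abs_def] by measurable
  have "\<kappa> x * (\<integral>\<^sup>+s. a s * indicator {..<x} s \<partial>lborel) \<le> ennreal m * (\<kappa>' x * indicator {0<..<r} x)" for x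
  proof (cases "x \<in> {0<..<r}")
    case True
    then have "(\<integral>\<^sup>+s. a s * indicator {..<x} s \<partial>lborel)
        = (\<integral>\<^sup>+s. ennreal (\<psi> s * g0 T b s) * indicator {0<..<x} s \<partial>lborel)"
      by (intro nn_integral_cong) (auto simp: a_def indicator_def)
    with True M m show ?thesis
      using inverse_sqrt_V_mult_weight_le[of \<psi> m x] by (simp add: \<kappa>_def \<kappa>'_def)
  next
    case False
    moreover have "(\<lambda>s. a s * indicator {..<x} s) = (\<lambda>s. 0)" if "x \<le> 0"
      using that by (auto simp: a_def indicator_def fun_eq_iff)
    ultimately show ?thesis by (cases "r \<le> x") (auto simp: \<kappa>_def)
  qed
  then have "(\<integral>\<^sup>+s. a s * (\<integral>\<^sup>+x. \<kappa> x * indicator {s<..} x \<partial>lborel) \<partial>lborel)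
      \<le> (\<integral>\<^sup>+x. ennreal m * (\<kappa>' x * indicator {0<..<r} x) \<partial>lborel)"
    by (subst nn_integral_swap_Ioi) (auto intro: nn_integral_mono)
  also have "\<dots> = ennreal m * (\<integral>\<^sup>+x. \<kappa>' x * indicator {0<..<r} x \<partial>lborel)"
    by (rule nn_integral_cmult) measurable
  also have "(\<integral>\<^sup>+x. \<kappa>' x * indicator {0<..<r} x \<partial>lborel) = ennreal (inverse (sqrt (V r)) - inverse (sqrt (V 0)))"
    unfolding \<kappa>'_def using r by (intro nn_integral_inverse_V_sqrt_V) simp
  also have "ennreal m * ennreal (inverse (sqrt (V r)) - inverse (sqrt (V 0)))
      \<le> ennreal m * ennreal (inverse (sqrt (V r)))"
    by (intro mult_left_mono ennreal_leI) simp_all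
  also have "\<dots> = ennreal (m / sqrt (V r))"
    using m by (simp add: ennreal_mult[symmetric] divide_inverse)
  finally show ?thesis by (simp add: a_def \<kappa>_def mult.assoc)
qed

lemma nn_integral_weight_sqrt_V_le:
  fixes \<psi> :: "real \<Rightarrow> real"
  assumes [measurable]: "\<psi> \<in> borel_measurable borel"
    and M: "M_bounded \<psi> m" and m: "0 \<le> m" and r: "0 < r"
  shows "(\<integral>\<^sup>+s. ennreal (\<psi> s * g0 T b s) * ennreal (sqrt (V s)) * indicator {0<..<r} s \<partial>lborel)
    \<le> ennreal (2 * m / sqrt (V r))"
proof -
  define a where "a s = ennreal (\<psi> s * g0 T b s) * indicator {0<..<r} s" for s
  define J where "J s = (\<integral>\<^sup>+x. ennreal (inverse (sqrt (V x)) / 2 / g0 T b x)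
      * indicator {..<r} x * indicator {s<..} x \<partial>lborel)" for s
  have [measurable]: "a \<in> borel_measurable borel" unfolding a_def[abs_def] by measurable
  have [measurable]: "J \<in> borel_measurable borel"
    unfolding J_def[abs_def] by (rule measurable_nn_integral_Ioi) measurable
  have "ennreal (\<psi> s * g0 T b s) * ennreal (sqrt (V s)) * indicator {0<..<r} s
      = ennreal (sqrt (V r)) * a s + a s * J s" for s
  proof (cases "s \<in> {0<..<r}")
    case True
    have "J s = (\<integral>\<^sup>+x. ennreal (inverse (sqrt (V x)) / 2 / g0 T b x) * indicator {s<..<r} x \<partial>lborel)"
      unfolding J_def by (intro nn_integral_cong) (auto simp: indicator_def)
    then have "ennreal (sqrt (V s)) = ennreal (sqrt (V r)) + J s"
      using sqrt_V_eq[of s r] True by simp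
    then show ?thesis using True by (simp add: a_def distrib_left mult_ac)
  qed (simp add: a_def)
  then have "(\<integral>\<^sup>+s. ennreal (\<psi> s * g0 T b s) * ennreal (sqrt (V s)) * indicator {0<..<r} s \<partial>lborel)
      = (\<integral>\<^sup>+s. ennreal (sqrt (V r)) * a s + a s * J s \<partial>lborel)"
    by simp
  also have "\<dots> = ennreal (sqrt (V r)) * (\<integral>\<^sup>+s. a s \<partial>lborel) + (\<integral>\<^sup>+s. a s * J s \<partial>lborel)"
    by (simp add: nn_integral_add nn_integral_cmult)
  also have "\<dots> \<le> ennreal (sqrt (V r)) * ennreal (m / V r) + ennreal (m / sqrt (V r))"
    using nn_integral_weight_tail_le[OF _ M m r] nn_integral_weight_le[OF M r]
    by (intro add_mono mult_left_mono) (simp_all add: a_def J_def mult.assoc)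
  also have "\<dots> = ennreal (2 * m / sqrt (V r))"
    using m V_pos[of r]
    by (simp add: ennreal_mult[symmetric] ennreal_plus[symmetric] field_simps real_sqrt_mult_self)
  finally show ?thesis .
qed

lemma g0_sqrt_V_mult_weight_le:
  assumes [measurable]: "\<psi> \<in> borel_measurable borel" and M: "M_bounded \<psi> m" and m: "0 \<le> m"
  shows "ennreal (g0 T b r * sqrt (V r))
      * (\<integral>\<^sup>+s. ennreal (\<psi> s * g0 T b s) * ennreal (sqrt (V s)) * indicator {0<..} s * indicator {..<r} s \<partial>lborel)
    \<le> ennreal (2 * m) * (ennreal (g0 T b r) * indicator {0<..} r)"
proof (cases "0 < r")
  case True
  have "(\<integral>\<^sup>+s. ennreal (\<psi> s * g0 T b s) * ennreal (sqrt (V s)) * indicator {0<..} s * indicator {..<r} s \<partial>lborel)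
      = (\<integral>\<^sup>+s. ennreal (\<psi> s * g0 T b s) * ennreal (sqrt (V s)) * indicator {0<..<r} s \<partial>lborel)"
    by (intro nn_integral_cong) (auto simp: indicator_def)
  also have "\<dots> \<le> ennreal (2 * m / sqrt (V r))"
    using True by (intro nn_integral_weight_sqrt_V_le M m) simp
  finally have "ennreal (g0 T b r * sqrt (V r))
      * (\<integral>\<^sup>+s. ennreal (\<psi> s * g0 T b s) * ennreal (sqrt (V s)) * indicator {0<..} s * indicator {..<r} s \<partial>lborel)
    \<le> ennreal (g0 T b r * sqrt (V r)) * ennreal (2 * m / sqrt (V r))"
    by (rule mult_left_mono) simp
  also have "\<dots> = ennreal (2 * m) * ennreal (g0 T b r)"
    using V_pos[of r] g0_pos[of r] m by (simp add: ennreal_mult[symmetric])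
  finally show ?thesis using True by simp
next
  case False
  then have "(\<lambda>s. ennreal (\<psi> s * g0 T b s) * ennreal (sqrt (V s)) * indicator {0<..} s * indicator {..<r} s)
      = (\<lambda>s. 0)"
    by (auto simp: indicator_def fun_eq_iff)
  then show ?thesis by simp
qed

theorem weighted_hardy_half_line:
  fixes \<psi> :: "real \<Rightarrow> real" and K :: "real \<Rightarrow> ennreal"
  assumes [measurable]: "\<psi> \<in> borel_measurable borel" "K \<in> borel_measurable borel"
    and M: "M_bounded \<psi> m" and m: "0 \<le> m"
  shows "(\<integral>\<^sup>+s. ennreal (\<psi> s * g0 T b s) * (\<integral>\<^sup>+r. K r * indicator {s<..} r \<partial>lborel) ^ 2
              * indicator {0<..} s \<partial>lborel)
    \<le> ennreal (4 * m) * (\<integral>\<^sup>+r. ennreal (g0 T b r) * K r ^ 2 * indicator {0<..} r \<partial>lborel)"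
proof -
  define f where "f s = ennreal (\<psi> s * g0 T b s) * ennreal (sqrt (V s)) * indicator {0<..} s" for s
  define G where "G r = ennreal (g0 T b r * sqrt (V r)) * K r ^ 2" for r
  have [measurable]: "f \<in> borel_measurable borel" "G \<in> borel_measurable borel"
    unfolding f_def[abs_def] G_def[abs_def] by measurable
  have "ennreal (\<psi> s * g0 T b s) * (\<integral>\<^sup>+r. K r * indicator {s<..} r \<partial>lborel) ^ 2 * indicator {0<..} s
      \<le> ennreal 2 * (f s * (\<integral>\<^sup>+r. G r * indicator {s<..} r \<partial>lborel))" for s
  proof (cases "0 < s")
    case True
    then have "ennreal (\<psi> s * g0 T b s) * (\<integral>\<^sup>+r. K r * indicator {s<..} r \<partial>lborel) ^ 2
        \<le> ennreal (\<psi> s * g0 T b s) * (ennreal (2 * sqrt (V s)) * (\<integral>\<^sup>+r. G r * indicator {s<..} r \<partial>lborel))"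
      unfolding G_def by (intro mult_left_mono sq_nn_integral_Ioi_le) auto
    with True show ?thesis by (simp add: f_def ennreal_mult mult_ac)
  qed simp
  then have "(\<integral>\<^sup>+s. ennreal (\<psi> s * g0 T b s) * (\<integral>\<^sup>+r. K r * indicator {s<..} r \<partial>lborel) ^ 2
              * indicator {0<..} s \<partial>lborel)
      \<le> ennreal 2 * (\<integral>\<^sup>+s. f s * (\<integral>\<^sup>+r. G r * indicator {s<..} r \<partial>lborel) \<partial>lborel)"
    by (subst nn_integral_cmult[symmetric])
       (auto intro!: nn_integral_mono measurable_nn_integral_Ioi[THEN borel_measurable_times_ennreal[rotated]])
  also have "(\<integral>\<^sup>+s. f s * (\<integral>\<^sup>+r. G r * indicator {s<..} r \<partial>lborel) \<partial>lborel)
      = (\<integral>\<^sup>+r. K r ^ 2 * (ennreal (g0 T b r * sqrt (V r)) * (\<integral>\<^sup>+s. f s * indicator {..<r} s \<partial>lborel)) \<partial>lborel)"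
    by (subst nn_integral_swap_Ioi) (simp_all add: G_def mult_ac)
  also have "\<dots> \<le> (\<integral>\<^sup>+r. K r ^ 2 * (ennreal (2 * m) * (ennreal (g0 T b r) * indicator {0<..} r)) \<partial>lborel)"
    unfolding f_def using g0_sqrt_V_mult_weight_le[OF _ M m] by (intro nn_integral_mono mult_left_mono) auto
  also have "\<dots> = ennreal (2 * m) * (\<integral>\<^sup>+r. ennreal (g0 T b r) * K r ^ 2 * indicator {0<..} r \<partial>lborel)"
    by (subst nn_integral_cmult[symmetric]) (simp_all add: mult_ac)
  finally show ?thesis
    using ennreal_mult'[of 2 "2 * m"] by (simp add: mult.assoc mult_left_mono)
qed

end

section \<open>Reduction to the half-line: the upper bound\<close>

locale frh_tree_fun = frh_tree +
  fixes u :: "real \<Rightarrow> nat list \<Rightarrow> real"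
  assumes C0inf: "C0inf T b u"
begin

definition edge_fun :: "nat \<Rightarrow> nat list \<Rightarrow> real \<Rightarrow> real" where
  "edge_fun k w = (SOME f. smooth_fun f \<and> (\<forall>s. T k \<le> ereal s \<and> ereal s \<le> T (Suc k) \<longrightarrow>
                 f s = (if ereal s = T k then u s (butlast w) else u s w)))"

lemma edge_fun:
  assumes "w \<in> words b (Suc k)"
  shows "smooth_fun (edge_fun k w)"
    and "\<And>s. t k < s \<Longrightarrow> s \<le> t (Suc k) \<Longrightarrow> edge_fun k w s = u s w"
    and "edge_fun k w (t k) = u (t k) (butlast w)"
proof -
  have "\<exists>f. smooth_fun f \<and> (\<forall>s. T k \<le> ereal s \<and> ereal s \<le> T (Suc k) \<longrightarrow>
                 f s = (if ereal s = T k then u s (butlast w) else u s w))"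
    using assms C0inf T_finite[of k] unfolding C0inf_def words_def by auto
  from someI_ex[OF this] have "smooth_fun (edge_fun k w)"
    and eq: "\<And>s. t k \<le> s \<Longrightarrow> s \<le> t (Suc k) \<Longrightarrow> edge_fun k w s = (if s = t k then u s (butlast w) else u s w)"
    unfolding edge_fun_def by (auto simp: T_eq_t)
  then show "smooth_fun (edge_fun k w)" by blast
  show "edge_fun k w s = u s w" if "t k < s" "s \<le> t (Suc k)" for s
    using eq[of s] that by simp
  show "edge_fun k w (t k) = u (t k) (butlast w)"
    using eq[of "t k"] t_less_Suc[of k] by simp
qed

definition edge_mean :: "nat \<Rightarrow> real \<Rightarrow> real" where
  "edge_mean k x = (\<Sum>w\<in>words b (Suc k). (edge_fun k w x)\<^sup>2) / g k"

definition edge_grad :: "nat \<Rightarrow> real \<Rightarrow> real" where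
  "edge_grad k x = sqrt ((\<Sum>w\<in>words b (Suc k). (deriv (edge_fun k w) x)\<^sup>2) / g k)"

lemma edge_mean_nonneg: "0 \<le> edge_mean k x"
  unfolding edge_mean_def using g_pos[of k] by (simp add: sum_nonneg)

lemma edge_grad_nonneg: "0 \<le> edge_grad k x"
  unfolding edge_grad_def using g_pos[of k] by (simp add: sum_nonneg)

lemma continuous_on_edge_grad: "continuous_on A (edge_grad k)"
  unfolding edge_grad_def using g_pos[of k]
  by (intro continuous_intros continuous_on_deriv_smooth_fun edge_fun(1)) auto

lemma edge_grad_measurable[measurable]: "edge_grad k \<in> borel_measurable borel"
  by (rule borel_measurable_continuous_onI) (rule continuous_on_edge_grad)

lemma edge_mean_has_derivative:
  "(edge_mean k has_real_derivative
     (\<Sum>w\<in>words b (Suc k). 2 * edge_fun k w x * deriv (edge_fun k w) x) / g k) (at x)"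
  unfolding edge_mean_def[abs_def]
  by (intro DERIV_cdivide DERIV_sum)
     (auto intro!: derivative_eq_intros smooth_fun_has_derivative edge_fun(1))

lemma sqrt_edge_mean_le:
  assumes "a \<le> c" and e: "0 < e"
  shows "sqrt (edge_mean k a + e) \<le> sqrt (edge_mean k c + e) + integral {a..c} (edge_grad k)"
proof -
  define W where "W = words b (Suc k)"
  define S where "S x = (\<Sum>w\<in>W. edge_fun k w x * deriv (edge_fun k w) x)" for x
  define D where "D x = g k * sqrt (edge_mean k x + e)" for x
  have pos: "0 < edge_mean k x + e" for x using edge_mean_nonneg[of k x] e by simp
  have D: "0 < D x" for x using pos[of x] g_pos[of k] by (simp add: D_def)
  show ?thesis
  proof (rule le_add_integral_of_deriv[OF assms(1) _ _ continuous_on_edge_grad])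
    fix x
    have "(\<Sum>w\<in>W. 2 * edge_fun k w x * deriv (edge_fun k w) x) = 2 * S x"
      by (simp add: S_def sum_distrib_left mult.assoc)
    then have eq: "inverse (sqrt (edge_mean k x + e)) / 2
        * ((\<Sum>w\<in>W. 2 * edge_fun k w x * deriv (edge_fun k w) x) / g k + 0) = S x / D x"
      using g_pos[of k] pos[of x] by (simp add: D_def field_simps)
    have "((\<lambda>x. sqrt (edge_mean k x + e)) has_real_derivative inverse (sqrt (edge_mean k x + e)) / 2
        * ((\<Sum>w\<in>W. 2 * edge_fun k w x * deriv (edge_fun k w) x) / g k + 0)) (at x)"
      unfolding W_def
      by (rule DERIV_chain2[OF DERIV_real_sqrt[OF pos] DERIV_add[OF edge_mean_has_derivative DERIV_const]])
    then show "((\<lambda>x. sqrt (edge_mean k x + e)) has_real_derivative S x / D x) (at x)"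
      by (simp only: eq)
    have "(\<Sum>w\<in>W. (edge_fun k w x)\<^sup>2) \<le> g k * (sqrt (edge_mean k x + e))\<^sup>2"
      using pos[of x] e g_pos[of k] by (simp add: edge_mean_def W_def field_simps)
    then have "\<bar>S x\<bar> / D x \<le> edge_grad k x"
      unfolding edge_grad_def W_def[symmetric] S_def D_def using g_pos[of k] pos[of x]
      by (intro abs_sum_mult_div_le) auto
    moreover have "- (S x / D x) \<le> \<bar>S x\<bar> / D x"
      using D[of x] by (metis abs_ge_minus_self divide_minus_left divide_right_mono less_imp_le)
    ultimately show "- (S x / D x) \<le> edge_grad k x" by linarith
  qed
qed

definition radial_grad :: "real \<Rightarrow> ennreal" where
  "radial_grad r = (\<Sum>j. ennreal (edge_grad j r) * indicator {t j<..<t (Suc j)} r)"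

lemma radial_grad_measurable[measurable]: "radial_grad \<in> borel_measurable borel"
  unfolding radial_grad_def by measurable

lemma radial_grad_edge:
  assumes "t k < r" "r < t (Suc k)"
  shows "radial_grad r = ennreal (edge_grad k r)"
proof -
  have "r \<notin> {t j<..<t (Suc j)}" if "j \<noteq> k" for j
    using that assms edge_unique[of k r j] by auto
  then have "(\<lambda>j. ennreal (edge_grad j r) * indicator {t j<..<t (Suc j)} r)
      = (\<lambda>j. if j = k then ennreal (edge_grad k r) else 0)"
    using assms by (auto simp: fun_eq_iff)
  then show ?thesis
    unfolding radial_grad_def using sums_unique[OF sums_single[of k "\<lambda>_. ennreal (edge_grad k r)"]] by simp
qed

lemma radial_grad_vertex:
  assumes "\<nexists>k. t k < r \<and> r < t (Suc k)"
  shows "radial_grad r = 0"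
proof -
  have "(\<lambda>j. ennreal (edge_grad j r) * indicator {t j<..<t (Suc j)} r) = (\<lambda>j. 0)"
    using assms by (auto simp: indicator_def fun_eq_iff)
  then show ?thesis unfolding radial_grad_def by simp
qed

lemma nn_integral_radial_grad_edge:
  assumes "t k \<le> s" "s \<le> t (Suc k)"
  shows "(\<integral>\<^sup>+r. radial_grad r * indicator {s<..<t (Suc k)} r \<partial>lborel)
    = ennreal (integral {s..t (Suc k)} (edge_grad k))"
proof -
  have "(\<integral>\<^sup>+r. radial_grad r * indicator {s<..<t (Suc k)} r \<partial>lborel)
      = (\<integral>\<^sup>+r. ennreal (edge_grad k r) * indicator {s<..<t (Suc k)} r \<partial>lborel)"
    using assms by (intro nn_integral_cong) (auto simp: indicator_def radial_grad_edge)
  also have "\<dots> = ennreal (integral {s..t (Suc k)} (edge_grad k))"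
    by (intro nn_integral_Ioo_eq_integral continuous_on_edge_grad edge_grad_nonneg)
  finally show ?thesis .
qed

definition sphere_mean :: "real \<Rightarrow> real" where
  "sphere_mean s = (\<Sum>w\<in>level T b s. (u s w)\<^sup>2) / g0 T b s"

lemma sphere_mean_edge:
  assumes "t k < s" "s \<le> t (Suc k)"
  shows "sphere_mean s = edge_mean k s"
  using assms by (simp add: sphere_mean_def edge_mean_def level_edge g0_edge edge_fun(2))

lemma sphere_mean_nonneg: "0 \<le> sphere_mean s"
  unfolding sphere_mean_def using g0_pos[of s] by (simp add: sum_nonneg)

text \<open>Continuity at the vertices: all \<open>b (Suc k)\<close> edges leaving a vertex start from its value.\<close>

lemma edge_mean_vertex: "edge_mean k (t (Suc k)) = edge_mean (Suc k) (t (Suc k))"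
proof -
  let ?t = "t (Suc k)"
  have inj: "inj_on (\<lambda>(v, i). v @ [i]) (words b (Suc k) \<times> {..<b (Suc k)})"
    by (auto simp: inj_on_def)
  have "(\<Sum>w\<in>words b (Suc (Suc k)). (edge_fun (Suc k) w ?t)\<^sup>2)
      = (\<Sum>w\<in>words b (Suc (Suc k)). (u ?t (butlast w))\<^sup>2)"
    by (intro sum.cong refl) (simp add: edge_fun(3))
  also have "\<dots> = (\<Sum>(v, i)\<in>words b (Suc k) \<times> {..<b (Suc k)}. (u ?t v)\<^sup>2)"
    unfolding words_Suc[of b "Suc k"] by (subst sum.reindex[OF inj]) (auto simp: split_def)
  also have "\<dots> = real (b (Suc k)) * (\<Sum>v\<in>words b (Suc k). (u ?t v)\<^sup>2)"
    by (simp add: sum.cartesian_product[symmetric] sum_distrib_left)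
  also have "(\<Sum>v\<in>words b (Suc k). (u ?t v)\<^sup>2) = (\<Sum>v\<in>words b (Suc k). (edge_fun k v ?t)\<^sup>2)"
    using t_less_Suc[of k] by (intro sum.cong refl) (simp add: edge_fun(2))
  finally show ?thesis
    using b_pos[of "Suc k"] g_pos[of k] by (simp add: edge_mean_def g_Suc)
qed

lemma edge_mean_eventually_0:
  obtains K where "\<And>m s. K \<le> m \<Longrightarrow> t m \<le> s \<Longrightarrow> s \<le> t (Suc m) \<Longrightarrow> edge_mean m s = 0"
proof -
  obtain R where R: "\<And>s w. R < s \<Longrightarrow> w \<in> level T b s \<Longrightarrow> u s w = 0"
    using C0inf unfolding C0inf_def by blast
  obtain K where K: "R < t K" using t_unbounded by blast
  have "edge_fun m w s = 0"
    if m: "Suc K \<le> m" and s: "t m \<le> s" "s \<le> t (Suc m)" and w: "w \<in> words b (Suc m)" for m s w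
  proof -
    have R_less: "R < t m" using K t_le_iff[of K m] m by simp
    obtain m' where m': "m = Suc m'" using m by (cases m) auto
    show ?thesis
    proof (cases "s = t m")
      case True
      have "butlast w \<in> level T b (t m)"
        using w m' t_less_Suc[of m'] by (simp add: level_edge butlast_words)
      with True R R_less w show ?thesis by (simp add: edge_fun(3))
    next
      case False
      then have "t m < s" using s by simp
      with R R_less w s show ?thesis by (simp add: edge_fun(2) level_edge)
    qed
  qed
  then show ?thesis by (intro that[of "Suc K"]) (simp add: edge_mean_def)
qed

lemma sqrt_edge_mean_le_tail:
  assumes e: "0 < e" and s: "t m \<le> s" "s \<le> t (Suc m)"
  shows "ennreal (sqrt (edge_mean m s + e))
    \<le> ennreal (sqrt e) + (\<integral>\<^sup>+r. radial_grad r * indicator {s<..} r \<partial>lborel)"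
proof -
  obtain K where K: "\<And>m s. K \<le> m \<Longrightarrow> t m \<le> s \<Longrightarrow> s \<le> t (Suc m) \<Longrightarrow> edge_mean m s = 0"
    using edge_mean_eventually_0 by blast
  from s show ?thesis
  proof (induction "K - m" arbitrary: m s)
    case 0
    then show ?case using K[of m s] by (simp add: add_increasing2)
  next
    case (Suc d)
    let ?I = "\<lambda>A. \<integral>\<^sup>+r. radial_grad r * indicator A r \<partial>lborel"
    have "sqrt (edge_mean m s + e)
        \<le> sqrt (edge_mean m (t (Suc m)) + e) + integral {s..t (Suc m)} (edge_grad m)"
      using Suc.prems e by (intro sqrt_edge_mean_le)
    then have "ennreal (sqrt (edge_mean m s + e))
        \<le> ennreal (sqrt (edge_mean m (t (Suc m)) + e) + integral {s..t (Suc m)} (edge_grad m))"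
      by (rule ennreal_leI)
    also have "\<dots> = ennreal (sqrt (edge_mean m (t (Suc m)) + e)) + ennreal (integral {s..t (Suc m)} (edge_grad m))"
      using e edge_mean_nonneg[of m "t (Suc m)"]
      by (intro ennreal_plus integral_nonneg integrable_continuous_real continuous_on_edge_grad edge_grad_nonneg)
         auto
    also have "\<dots> = ennreal (sqrt (edge_mean (Suc m) (t (Suc m)) + e)) + ?I {s<..<t (Suc m)}"
      using Suc.prems by (simp add: edge_mean_vertex nn_integral_radial_grad_edge)
    also have "\<dots> \<le> (ennreal (sqrt e) + ?I {t (Suc m)<..}) + ?I {s<..<t (Suc m)}"
      using Suc.hyps less_imp_le[OF t_less_Suc] by (intro add_right_mono) simp
    also have "\<dots> = ennreal (sqrt e) + (?I {s<..<t (Suc m)} + ?I {t (Suc m)<..})"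
      by (simp add: ac_simps)
    also have "\<dots> \<le> ennreal (sqrt e) + ?I {s<..}"
      using Suc.prems(2) by (intro add_left_mono nn_integral_Ioo_add_Ioi_le) simp
    finally show ?case .
  qed
qed

lemma sphere_mean_le:
  assumes "0 < s"
  shows "ennreal (sphere_mean s) \<le> (\<integral>\<^sup>+r. radial_grad r * indicator {s<..} r \<partial>lborel) ^ 2"
proof -
  obtain k where k: "t k < s" "s \<le> t (Suc k)" using ex_edge_Ioc[OF assms] by blast
  define Q where "Q = (\<integral>\<^sup>+r. radial_grad r * indicator {s<..} r \<partial>lborel)"
  show ?thesis
  proof (cases Q)
    case (real q)
    have "sqrt (edge_mean k s) \<le> q"
    proof (rule sqrt_le_of_forall_sqrt_add_le[OF edge_mean_nonneg])
      fix e :: real assume "0 < e"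
      then have "ennreal (sqrt (edge_mean k s + e)) \<le> ennreal (sqrt e + q)"
        using sqrt_edge_mean_le_tail[of e k s] k real by (simp add: Q_def ennreal_plus)
      then show "sqrt (edge_mean k s + e) \<le> sqrt e + q"
        using real \<open>0 < e\<close> by (subst (asm) ennreal_le_iff) auto
    qed
    then have "(sqrt (edge_mean k s))\<^sup>2 \<le> q\<^sup>2" by (rule power_mono) (simp add: edge_mean_nonneg)
    then have "edge_mean k s \<le> q\<^sup>2" using edge_mean_nonneg[of k s] by simp
    then show ?thesis using real k by (simp add: Q_def[symmetric] sphere_mean_edge ennreal_power ennreal_leI)
  qed (simp add: Q_def[symmetric])
qed

lemma deriv_u_edge:
  assumes "t k < r" "r < t (Suc k)" "w \<in> words b (Suc k)"
  shows "deriv (\<lambda>x. u x w) r = deriv (edge_fun k w) r"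
proof (rule DERIV_imp_deriv, rule has_field_derivative_transform_within_open)
  show "(edge_fun k w has_real_derivative deriv (edge_fun k w) r) (at r)"
    using assms by (intro smooth_fun_has_derivative edge_fun(1))
  show "edge_fun k w x = u x w" if "x \<in> {t k<..<t (Suc k)}" for x
    using that assms by (simp add: edge_fun(2))
qed (use assms in auto)

lemma tree_int_weight_le:
  assumes "\<forall>s>0. 0 \<le> \<psi> s"
  shows "tree_int T b (\<lambda>s w. \<psi> s * (u s w)\<^sup>2)
    \<le> (\<integral>\<^sup>+s. ennreal (\<psi> s * g0 T b s) * (\<integral>\<^sup>+r. radial_grad r * indicator {s<..} r \<partial>lborel) ^ 2
          * indicator {0<..} s \<partial>lborel)"
  unfolding tree_int_def
proof (intro nn_integral_mono)
  fix s :: real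
  show "ennreal (\<Sum>w\<in>level T b s. \<psi> s * (u s w)\<^sup>2) * indicator {0<..} s
    \<le> ennreal (\<psi> s * g0 T b s) * (\<integral>\<^sup>+r. radial_grad r * indicator {s<..} r \<partial>lborel) ^ 2 * indicator {0<..} s"
  proof (cases "0 < s")
    case True
    have "(\<Sum>w\<in>level T b s. \<psi> s * (u s w)\<^sup>2) = \<psi> s * (\<Sum>w\<in>level T b s. (u s w)\<^sup>2)"
      by (simp add: sum_distrib_left)
    also have "\<dots> = (\<psi> s * g0 T b s) * sphere_mean s"
      using g0_pos[of s] by (simp add: sphere_mean_def)
    finally have "(\<Sum>w\<in>level T b s. \<psi> s * (u s w)\<^sup>2) = (\<psi> s * g0 T b s) * sphere_mean s" .
    then have "ennreal (\<Sum>w\<in>level T b s. \<psi> s * (u s w)\<^sup>2) = ennreal (\<psi> s * g0 T b s) * ennreal (sphere_mean s)"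
      using assms True g0_pos[of s] sphere_mean_nonneg[of s] by (simp add: ennreal_mult)
    also have "\<dots> \<le> ennreal (\<psi> s * g0 T b s) * (\<integral>\<^sup>+r. radial_grad r * indicator {s<..} r \<partial>lborel) ^ 2"
      using True by (intro mult_left_mono sphere_mean_le) simp_all
    finally show ?thesis using True by simp
  qed simp
qed

lemma nn_integral_radial_grad_le:
  "(\<integral>\<^sup>+r. ennreal (g0 T b r) * radial_grad r ^ 2 * indicator {0<..} r \<partial>lborel)
    \<le> tree_int T b (\<lambda>s w. (deriv (\<lambda>r. u r w) s)\<^sup>2)"
  unfolding tree_int_def
proof (intro nn_integral_mono)
  fix r :: real
  show "ennreal (g0 T b r) * radial_grad r ^ 2 * indicator {0<..} r
    \<le> ennreal (\<Sum>w\<in>level T b r. (deriv (\<lambda>r. u r w) r)\<^sup>2) * indicator {0<..} r"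
  proof (cases "\<exists>k. t k < r \<and> r < t (Suc k)")
    case True
    then obtain k where k: "t k < r" "r < t (Suc k)" by blast
    have "g0 T b r * (edge_grad k r)\<^sup>2 = (\<Sum>w\<in>level T b r. (deriv (\<lambda>r. u r w) r)\<^sup>2)"
      using k g_pos[of k] by (simp add: g0_edge level_edge edge_grad_def deriv_u_edge sum_nonneg)
    moreover have "ennreal (g0 T b r) * radial_grad r ^ 2 = ennreal (g0 T b r * (edge_grad k r)\<^sup>2)"
      using k g0_pos[of r] edge_grad_nonneg[of k r] by (simp add: radial_grad_edge ennreal_power ennreal_mult)
    moreover have "0 < r" using k t_nonneg[of k] by simp
    ultimately show ?thesis by simp
  qed (simp add: radial_grad_vertex)
qed

theorem hardy_upper:
  assumes [measurable]: "\<psi> \<in> borel_measurable borel"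
    and "\<forall>s>0. 0 \<le> \<psi> s" "M_bounded \<psi> m" "0 \<le> m"
  shows "tree_int T b (\<lambda>s w. \<psi> s * (u s w)\<^sup>2) \<le> ennreal (4 * m) * tree_int T b (\<lambda>s w. (deriv (\<lambda>r. u r w) s)\<^sup>2)"
proof -
  have "tree_int T b (\<lambda>s w. \<psi> s * (u s w)\<^sup>2)
      \<le> (\<integral>\<^sup>+s. ennreal (\<psi> s * g0 T b s) * (\<integral>\<^sup>+r. radial_grad r * indicator {s<..} r \<partial>lborel) ^ 2
          * indicator {0<..} s \<partial>lborel)"
    using assms(2) by (rule tree_int_weight_le)
  also have "\<dots> \<le> ennreal (4 * m) * (\<integral>\<^sup>+r. ennreal (g0 T b r) * radial_grad r ^ 2 * indicator {0<..} r \<partial>lborel)"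
    using assms(3,4) by (intro weighted_hardy_half_line) measurable
  also have "\<dots> \<le> ennreal (4 * m) * tree_int T b (\<lambda>s w. (deriv (\<lambda>r. u r w) s)\<^sup>2)"
    by (intro mult_left_mono nn_integral_radial_grad_le) simp
  finally show ?thesis .
qed

end

section \<open>Test functions: the lower bound\<close>

text \<open>
  The test function for the lower bound at the point \<open>\<tau>\<close> of the edge \<open>j\<close> is the radial function
  \<open>min (V \<tau>) (V s) - V (t K)\<close>, cut off at \<open>t K\<close>, with its corner at \<open>\<tau>\<close> smoothed by a
  softplus of sharpness \<open>\<nu>\<close>.  Since \<open>V\<close> is affine on edges, it is smooth on every closed edge.
  Its slope satisfies \<open>g\<^sub>0 h'\<^sup>2 \<le> -h'\<close>, so its energy is at most its value at the root.
\<close>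

locale radial_test = frh_tree +
  fixes j K :: nat and \<nu> \<tau> :: real
  assumes tau_edge: "t j < \<tau>" "\<tau> \<le> t (Suc j)" and K: "Suc (Suc j) \<le> K" and nu: "0 < \<nu>"
begin

definition test_edge :: "real \<Rightarrow> real" where
  "test_edge x = (V (t (Suc j)) - V (t K)) + (soft_ramp \<nu> \<tau> (t (Suc j)) - soft_ramp \<nu> \<tau> x) / g j"

definition test_fun :: "real \<Rightarrow> real" where
  "test_fun s = test_edge (max (t j) (min s (t (Suc j)))) + V (max (t (Suc j)) (min s (t K))) - V (t (Suc j))"

lemma t_Suc_j_less_t_K: "t (Suc j) < t K"
  using K by (simp add: t_less_iff)

lemma test_fun_before: "s \<le> t j \<Longrightarrow> test_fun s = test_edge (t j)"
  using t_less_Suc[of j] t_Suc_j_less_t_K by (simp add: test_fun_def)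

lemma test_fun_edge: "t j \<le> s \<Longrightarrow> s \<le> t (Suc j) \<Longrightarrow> test_fun s = test_edge s"
  using t_Suc_j_less_t_K by (simp add: test_fun_def)

lemma test_fun_after:
  "t (Suc j) \<le> s \<Longrightarrow> s \<le> t K \<Longrightarrow> test_fun s = V s - V (t K)"
  using t_less_Suc[of j] by (simp add: test_fun_def test_edge_def)

lemma test_fun_beyond: "t K \<le> s \<Longrightarrow> test_fun s = 0"
  using t_less_Suc[of j] t_Suc_j_less_t_K by (simp add: test_fun_def test_edge_def)

lemma test_edge_smooth: "smooth_fun test_edge"
proof -
  have eq: "test_edge = (\<lambda>x. ((V (t (Suc j)) - V (t K)) + soft_ramp \<nu> \<tau> (t (Suc j)) / g j)
      - (1 / (\<nu> * g j)) * softplus (\<nu> * (x - \<tau>)))"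
    using nu g_pos[of j] by (auto simp: fun_eq_iff test_edge_def soft_ramp_def field_simps)
  show ?thesis unfolding eq by (rule smooth_fun_softplus_affine)
qed

lemma test_edge_has_derivative: "(test_edge has_real_derivative - logistic (\<nu> * (x - \<tau>)) / g j) (at x)"
  unfolding test_edge_def[abs_def]
  using soft_ramp_has_derivative[OF nu] g_pos[of j] by (auto intro!: derivative_eq_intros)

lemma test_fun_edge_smooth:
  "\<exists>f. smooth_fun f \<and> (\<forall>s. t k \<le> s \<and> s \<le> t (Suc k) \<longrightarrow> f s = test_fun s)"
proof -
  consider "k < j" | "k = j" | "j < k" "k < K" | "K \<le> k" by linarith
  then show ?thesis
  proof cases
    case 1
    then have "t (Suc k) \<le> t j" by (simp add: t_le_iff)
    then show ?thesis using test_fun_before by (intro exI[of _ "\<lambda>_. test_edge (t j)"]) (auto simp: smooth_fun_const)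
  next
    case 2
    then show ?thesis using test_fun_edge test_edge_smooth by (intro exI[of _ test_edge]) auto
  next
    case 3
    have "test_fun s = (V (t k) + t k / g k - V (t K)) + (- 1 / g k) * s" if s: "t k \<le> s" "s \<le> t (Suc k)" for s
    proof -
      have "t (Suc j) \<le> s" "s \<le> t K"
        using s 3 t_le_iff[of "Suc j" k] t_le_iff[of "Suc k" K] by auto
      moreover have "V (t k) = V s + (s - t k) / g k" using s by (intro V_edge) auto
      ultimately show ?thesis using g_pos[of k] by (simp add: test_fun_after field_simps)
    qed
    then show ?thesis
      by (intro exI[of _ "\<lambda>s. (V (t k) + t k / g k - V (t K)) + (- 1 / g k) * s"] conjI smooth_fun_affine)
         auto
  next
    case 4
    then have "t K \<le> t k" by (simp add: t_le_iff)
    then show ?thesis using test_fun_beyond by (intro exI[of _ "\<lambda>_. 0"]) (auto simp: smooth_fun_const)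
  qed
qed

lemma C0inf_test_fun: "C0inf T b (\<lambda>s w. test_fun s)"
  unfolding C0inf_def
proof (intro conjI allI impI)
  fix k :: nat
  obtain f where "smooth_fun f" "\<forall>s. t k \<le> s \<and> s \<le> t (Suc k) \<longrightarrow> f s = test_fun s"
    using test_fun_edge_smooth by blast
  then show "\<exists>f. smooth_fun f \<and> (\<forall>s. T k \<le> ereal s \<and> ereal s \<le> T (Suc k) \<longrightarrow>
      f s = (if ereal s = T k then test_fun s else test_fun s))"
    by (auto simp: T_eq_t)
next
  show "\<exists>R. \<forall>s w. R < s \<longrightarrow> w \<in> level T b s \<longrightarrow> test_fun s = 0"
    using test_fun_beyond by (intro exI[of _ "t K"]) auto
qed

lemma V_t_Suc_j_gt: "V (t K) < V (t (Suc j))"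
proof -
  have "V (t (Suc j)) = V (t (Suc (Suc j))) + (t (Suc (Suc j)) - t (Suc j)) / g (Suc j)"
    by (intro V_edge) (auto simp: t_le_iff)
  moreover have "V (t K) \<le> V (t (Suc (Suc j)))" using K by (intro antimono_V) (simp add: t_le_iff)
  moreover have "0 < (t (Suc (Suc j)) - t (Suc j)) / g (Suc j)"
    using t_less_Suc[of "Suc j"] g_pos[of "Suc j"] by simp
  ultimately show ?thesis by linarith
qed

lemma test_fun_tau_ge: "V (t (Suc j)) - V (t K) \<le> test_fun \<tau>"
  using soft_ramp_mono[OF nu, of \<tau> "t (Suc j)" \<tau>] tau_edge g_pos[of j]
  by (simp add: test_fun_edge test_edge_def)

lemma test_fun_tau_pos: "0 < test_fun \<tau>"
  using test_fun_tau_ge V_t_Suc_j_gt by simp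

lemma test_fun_tau_le: "s \<le> \<tau> \<Longrightarrow> test_fun \<tau> \<le> test_fun s"
proof -
  assume s: "s \<le> \<tau>"
  have "soft_ramp \<nu> \<tau> (max s (t j)) \<le> soft_ramp \<nu> \<tau> \<tau>" using s tau_edge by (intro soft_ramp_mono nu) simp
  then have "test_edge \<tau> \<le> test_edge (max s (t j))"
    using g_pos[of j] by (simp add: test_edge_def divide_right_mono)
  then show ?thesis using s tau_edge test_fun_before test_fun_edge
    by (cases "s \<le> t j") (auto simp: max_def)
qed

lemma test_fun_0_le: "test_fun 0 \<le> test_fun \<tau> + ln 2 / \<nu>"
proof -
  have "test_edge (t j) - test_edge \<tau> = (soft_ramp \<nu> \<tau> \<tau> - soft_ramp \<nu> \<tau> (t j)) / g j"
    by (simp add: test_edge_def diff_divide_distrib)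
  also have "\<dots> \<le> soft_ramp \<nu> \<tau> \<tau> / g j"
    using soft_ramp_nonneg[OF nu, of \<tau> "t j"] g_pos[of j] by (simp add: divide_right_mono)
  also have "\<dots> \<le> soft_ramp \<nu> \<tau> \<tau>"
  proof -
    have "soft_ramp \<nu> \<tau> \<tau> * 1 \<le> soft_ramp \<nu> \<tau> \<tau> * g j"
      by (intro mult_left_mono g_ge_1 soft_ramp_nonneg nu)
    then show ?thesis using g_pos[of j] by (simp add: divide_le_eq)
  qed
  finally show ?thesis
    using tau_edge t_nonneg[of j] by (simp add: test_fun_before test_fun_edge soft_ramp_center)
qed

lemma test_fun_tau_lower: "V \<tau> - V (t K) - ln 2 / \<nu> \<le> test_fun \<tau>"
proof -
  have "V \<tau> = V (t (Suc j)) + (t (Suc j) - \<tau>) / g j" using tau_edge by (intro V_edge) auto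
  moreover have "(t (Suc j) - \<tau>) - ln 2 / \<nu> \<le> soft_ramp \<nu> \<tau> (t (Suc j)) - soft_ramp \<nu> \<tau> \<tau>"
    using soft_ramp_ge[OF nu, of "t (Suc j)" \<tau>] by (simp add: soft_ramp_center)
  then have "((t (Suc j) - \<tau>) - ln 2 / \<nu>) / g j \<le> (soft_ramp \<nu> \<tau> (t (Suc j)) - soft_ramp \<nu> \<tau> \<tau>) / g j"
    using g_pos[of j] by (rule divide_right_mono[OF _ less_imp_le])
  moreover have "ln 2 / \<nu> / g j \<le> ln 2 / \<nu>"
    using g_ge_1[of j] nu by (simp add: divide_le_eq field_simps)
  ultimately show ?thesis
    using tau_edge by (simp add: test_fun_edge test_edge_def diff_divide_distrib)
qed

definition test_deriv :: "nat \<Rightarrow> real \<Rightarrow> real" where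
  "test_deriv k s = (if k < j then 0 else if k = j then - logistic (\<nu> * (s - \<tau>)) / g j
     else if k < K then - 1 / g k else 0)"

lemma test_fun_has_derivative:
  assumes s: "t k < s" "s < t (Suc k)"
  shows "(test_fun has_real_derivative test_deriv k s) (at s)"
proof -
  have transform: "(test_fun has_real_derivative D) (at s)"
    if f: "(f has_real_derivative D) (at s)"
      and eq: "\<And>x. t k < x \<Longrightarrow> x < t (Suc k) \<Longrightarrow> f x = test_fun x" for f D
  proof (rule has_field_derivative_transform_within_open[OF f, of "{t k<..<t (Suc k)}"])
    show "s \<in> {t k<..<t (Suc k)}" using s by simp
    show "f x = test_fun x" if "x \<in> {t k<..<t (Suc k)}" for x using that eq by simp
  qed simp
  consider "k < j" | "k = j" | "j < k" "k < K" | "K \<le> k" by linarith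
  then show ?thesis
  proof cases
    case 1
    then have "t (Suc k) \<le> t j" by (simp add: t_le_iff)
    then have "(test_fun has_real_derivative 0) (at s)"
      by (intro transform[OF DERIV_const]) (simp add: test_fun_before)
    with 1 show ?thesis by (simp add: test_deriv_def)
  next
    case 2
    then have "(test_fun has_real_derivative - logistic (\<nu> * (s - \<tau>)) / g j) (at s)"
      using tau_edge by (intro transform[OF test_edge_has_derivative]) (simp add: test_fun_edge)
    with 2 show ?thesis by (simp add: test_deriv_def)
  next
    case 3
    then have "t (Suc j) \<le> t k" "t (Suc k) \<le> t K" by (simp_all add: t_le_iff)
    then have "(test_fun has_real_derivative - 1 / g k - 0) (at s)"
      by (intro transform[OF DERIV_diff[OF V_has_derivative[OF s] DERIV_const]]) (simp add: test_fun_after)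
    with 3 show ?thesis by (simp add: test_deriv_def)
  next
    case 4
    then have "t K \<le> t k" by (simp add: t_le_iff)
    then have "(test_fun has_real_derivative 0) (at s)"
      by (intro transform[OF DERIV_const]) (simp add: test_fun_beyond)
    with 4 K show ?thesis by (simp add: test_deriv_def)
  qed
qed

lemma test_deriv_nonpos: "test_deriv k s \<le> 0"
  using logistic_pos[of "\<nu> * (s - \<tau>)"] g_pos[of j] g_pos[of k] by (simp add: test_deriv_def)

lemma test_deriv_sq_le: "g k * (test_deriv k s)\<^sup>2 \<le> - test_deriv k s"
proof -
  have "logistic (\<nu> * (s - \<tau>)) * logistic (\<nu> * (s - \<tau>)) \<le> 1 * logistic (\<nu> * (s - \<tau>))"
    using logistic_le_1 logistic_pos by (intro mult_right_mono) (auto simp: less_imp_le)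
  then show ?thesis
    using g_pos[of j] g_pos[of k] by (simp add: test_deriv_def power2_eq_square divide_right_mono)
qed

lemma test_deriv_beyond: "K \<le> k \<Longrightarrow> test_deriv k s = 0"
  using K by (simp add: test_deriv_def)

lemma continuous_on_test_fun: "continuous_on A test_fun"
proof -
  have "continuous_on UNIV test_edge"
    using test_edge_has_derivative by (intro continuous_at_imp_continuous_on) (blast intro: DERIV_isCont)
  then have "continuous_on UNIV (\<lambda>s. test_edge (max (t j) (min s (t (Suc j)))))"
    by (rule continuous_on_compose2) (auto intro!: continuous_intros)
  moreover have "continuous_on UNIV (\<lambda>s. V (max (t (Suc j)) (min s (t K))))"
    by (rule continuous_on_compose2[OF continuous_on_V]) (auto intro!: continuous_intros)
  ultimately have "continuous_on UNIV test_fun"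
    unfolding test_fun_def by (intro continuous_intros)
  then show ?thesis by (rule continuous_on_subset) simp
qed

lemma sum_deriv_test_fun_le:
  assumes "0 < x" "x \<notin> range t"
  shows "ennreal (\<Sum>w\<in>level T b x. (deriv test_fun x)\<^sup>2)
    \<le> ennreal (- deriv test_fun x) * indicator {..<t K} x"
proof -
  obtain k where k: "t k < x" "x < t (Suc k)" using ex_open_edge[OF assms] by blast
  have "deriv test_fun x = test_deriv k x" using test_fun_has_derivative[OF k] by (rule DERIV_imp_deriv)
  moreover have "(\<Sum>w\<in>level T b x. (test_deriv k x)\<^sup>2) = g k * (test_deriv k x)\<^sup>2"
    using k by (simp add: level_edge card_edge_words)
  moreover have "test_deriv k x = 0" if "t K \<le> x"
    using that k t_less_iff[of K "Suc k"] by (intro test_deriv_beyond) simp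
  ultimately show ?thesis using test_deriv_sq_le[of k x] by (auto simp: indicator_def intro: ennreal_leI)
qed

text \<open>The slope is set to \<open>0\<close> at the vertices, a null set where \<open>test_fun\<close> may have no derivative.\<close>

lemma nn_integral_slope_test_fun:
  "(\<integral>\<^sup>+x. ennreal (if x \<in> range t then 0 else - deriv test_fun x) * indicator {0<..<t K} x \<partial>lborel)
    = ennreal (test_fun 0)"
proof -
  define f where "f x = (if x \<in> range t then 0 else - deriv test_fun x)" for x
  have f_edge: "f x = - test_deriv k x" if k: "t k < x" "x < t (Suc k)" for k x
    using not_vertex[OF k] DERIV_imp_deriv[OF test_fun_has_derivative[OF k]] by (simp add: f_def)
  have "(\<integral>\<^sup>+x. ennreal (f x) * indicator {0<..<t K} x \<partial>lborel) = ennreal ((- test_fun (t K)) - (- test_fun 0))"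
  proof (rule nn_integral_Ioo_fundamental[OF t_nonneg finite_vertices_below[of "t K"]])
    show "continuous_on {0..t K} (\<lambda>x. - test_fun x)" by (intro continuous_intros continuous_on_test_fun)
  next
    fix x assume x: "x \<in> {0<..<t K} - range t \<inter> {..t K}"
    then obtain k where k: "t k < x" "x < t (Suc k)" using ex_open_edge[of x] by auto
    show "((\<lambda>x. - test_fun x) has_real_derivative f x) (at x)"
      unfolding f_edge[OF k] by (rule DERIV_minus[OF test_fun_has_derivative[OF k]])
  next
    fix x assume x: "x \<in> {0<..<t K}"
    show "0 \<le> f x"
    proof (cases "x \<in> range t")
      case False
      then obtain k where k: "t k < x" "x < t (Suc k)" using ex_open_edge[of x] x by auto
      then show ?thesis using test_deriv_nonpos[of k x] by (simp add: f_edge)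
    qed (simp add: f_def)
  qed
  then show ?thesis by (simp add: f_def test_fun_beyond)
qed

lemma energy_test_fun: "tree_int T b (\<lambda>s w. (deriv (\<lambda>r. test_fun r) s)\<^sup>2) \<le> ennreal (test_fun 0)"
  unfolding nn_integral_slope_test_fun[symmetric] tree_int_def
proof (rule nn_integral_mono_AE)
  have "AE x in lborel. x \<notin> range t"
    by (rule AE_not_in) (rule countable_imp_null_set_lborel, simp)
  then show "AE x in lborel. ennreal (\<Sum>w\<in>level T b x. (deriv (\<lambda>r. test_fun r) x)\<^sup>2) * indicator {0<..} x
      \<le> ennreal (if x \<in> range t then 0 else - deriv test_fun x) * indicator {0<..<t K} x"
  proof eventually_elim
    fix x assume x: "x \<notin> range t"
    show "ennreal (\<Sum>w\<in>level T b x. (deriv (\<lambda>r. test_fun r) x)\<^sup>2) * indicator {0<..} x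
      \<le> ennreal (if x \<in> range t then 0 else - deriv test_fun x) * indicator {0<..<t K} x"
    proof (cases "0 < x")
      case True
      with x show ?thesis using sum_deriv_test_fun_le[OF True x] by (simp add: indicator_def)
    qed simp
  qed
qed

lemma weighted_test_fun_ge:
  assumes nonneg: "\<forall>s>0. 0 \<le> \<psi> s"
    and [measurable]: "(\<lambda>s. ennreal (\<psi> s * g0 T b s) * indicator {0<..\<tau>} s) \<in> borel_measurable lborel"
  shows "(\<integral>\<^sup>+s\<in>{0<..\<tau>}. ennreal (\<psi> s * g0 T b s) \<partial>lborel) * ennreal ((test_fun \<tau>)\<^sup>2)
    \<le> tree_int T b (\<lambda>s w. \<psi> s * (test_fun s)\<^sup>2)"
proof -
  have "ennreal (\<psi> s * g0 T b s) * ennreal ((test_fun \<tau>)\<^sup>2)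
      \<le> ennreal (\<Sum>w\<in>level T b s. \<psi> s * (test_fun s)\<^sup>2)" if s: "0 < s" "s \<le> \<tau>" for s
  proof -
    have "(test_fun \<tau>)\<^sup>2 \<le> (test_fun s)\<^sup>2"
      using test_fun_tau_le[OF s(2)] test_fun_tau_pos by (intro power_mono) auto
    then have "\<psi> s * g0 T b s * (test_fun \<tau>)\<^sup>2 \<le> \<psi> s * g0 T b s * (test_fun s)\<^sup>2"
      using nonneg s g0_pos[of s] by (intro mult_left_mono) auto
    then show ?thesis
      using nonneg s g0_pos[of s] card_level[OF s(1)] by (simp add: ennreal_mult[symmetric] ennreal_leI mult_ac)
  qed
  then have "(\<integral>\<^sup>+s. ennreal (\<psi> s * g0 T b s) * indicator {0<..\<tau>} s * ennreal ((test_fun \<tau>)\<^sup>2) \<partial>lborel)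
      \<le> tree_int T b (\<lambda>s w. \<psi> s * (test_fun s)\<^sup>2)"
    unfolding tree_int_def by (intro nn_integral_mono) (auto simp: indicator_def)
  then show ?thesis by (simp add: nn_integral_multc)
qed

lemma hardy_ineq_test_fun:
  assumes "\<forall>s>0. 0 \<le> \<psi> s"
    and meas: "(\<lambda>s. ennreal (\<psi> s * g0 T b s) * indicator {0<..\<tau>} s) \<in> borel_measurable lborel"
    and hardy: "hardy_ineq T b \<psi> (ennreal C)" and C: "0 \<le> C"
  shows "(\<integral>\<^sup>+s\<in>{0<..\<tau>}. ennreal (\<psi> s * g0 T b s) \<partial>lborel) * ennreal ((test_fun \<tau>)\<^sup>2)
    \<le> ennreal (C * test_fun 0)"
proof -
  have "(\<integral>\<^sup>+s\<in>{0<..\<tau>}. ennreal (\<psi> s * g0 T b s) \<partial>lborel) * ennreal ((test_fun \<tau>)\<^sup>2)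
      \<le> tree_int T b (\<lambda>s w. \<psi> s * (test_fun s)\<^sup>2)"
    by (rule weighted_test_fun_ge[OF assms(1) meas])
  also have "\<dots> \<le> ennreal C * tree_int T b (\<lambda>s w. (deriv (\<lambda>r. test_fun r) s)\<^sup>2)"
    using hardy C0inf_test_fun unfolding hardy_ineq_def by blast
  also have "\<dots> \<le> ennreal C * ennreal (test_fun 0)"
    by (intro mult_left_mono energy_test_fun) simp
  also have "\<dots> = ennreal (C * test_fun 0)"
    using ennreal_mult'[OF C, of "test_fun 0"] by simp
  finally show ?thesis .
qed

end

context frh_tree
begin

lemma V_diff_le_of_test_fun_bound:
  fixes p C :: real
  assumes tau: "t j < \<tau>" "\<tau> \<le> t (Suc j)" and K: "Suc (Suc j) \<le> K" and p: "0 \<le> p" and C: "0 \<le> C"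
    and le: "\<And>\<nu>. 0 < \<nu> \<Longrightarrow>
      p * (radial_test.test_fun T b j K \<nu> \<tau> \<tau>)\<^sup>2 \<le> C * radial_test.test_fun T b j K \<nu> \<tau> 0"
  shows "p * (V \<tau> - V (t K)) \<le> C"
proof -
  define W where "W = V (t (Suc j)) - V (t K)"
  have W: "0 < W"
  proof -
    interpret radial_test T b j K 1 \<tau> using tau K by unfold_locales auto
    show ?thesis using V_t_Suc_j_gt by (simp add: W_def)
  qed
  show ?thesis
  proof (rule le_of_forall_le_add_mult[where A = "(p + C / W) * ln 2"])
    fix e :: real assume e: "0 < e"
    interpret radial_test T b j K "1 / e" \<tau>
      using tau K e by unfold_locales auto
    define x where "x = test_fun \<tau>"
    have xW: "W \<le> x" unfolding x_def W_def by (rule test_fun_tau_ge)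
    have "p * x\<^sup>2 \<le> C * test_fun 0" using le[of "1 / e"] e by (simp add: x_def)
    also have "\<dots> \<le> C * (x + ln 2 * e)"
      using test_fun_0_le C by (intro mult_left_mono) (simp_all add: x_def)
    finally have "p * x\<^sup>2 \<le> C * (x + ln 2 * e)" .
    then have "p * x \<le> C + C * (ln 2 * e) / x"
      using xW W by (simp add: field_simps power2_eq_square)
    moreover have "C * (ln 2 * e) / x \<le> C * (ln 2 * e) / W"
      using xW W C e by (intro divide_left_mono) auto
    ultimately have "p * x \<le> C + C * (ln 2 * e) / W" by linarith
    moreover have "V \<tau> - V (t K) \<le> x + ln 2 * e"
      using test_fun_tau_lower unfolding x_def by simp
    then have "p * (V \<tau> - V (t K)) \<le> p * x + p * (ln 2 * e)"
      using p by (metis distrib_left mult_left_mono)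
    ultimately show "p * (V \<tau> - V (t K)) \<le> C + (p + C / W) * ln 2 * e"
      by (simp add: field_simps)
  qed (use p C W in simp)
qed

lemma mult_V_le_of_forall_V_diff_le:
  assumes le: "\<And>K. K0 \<le> K \<Longrightarrow> p * (V \<tau> - V (t K)) \<le> C" and p: "0 \<le> p"
  shows "p * V \<tau> \<le> C"
proof (rule le_of_forall_le_add_mult[where A = p])
  fix e :: real assume "0 < e"
  obtain R where R: "\<And>x. R \<le> x \<Longrightarrow> V x < e"
    using order_tendstoD(2)[OF V_tendsto_0 \<open>0 < e\<close>] by (auto simp: eventually_at_top_linorder)
  obtain N where "R < t N" using t_unbounded by blast
  define K where "K = max N K0"
  have "t N \<le> t K" by (simp add: K_def t_le_iff)
  with \<open>R < t N\<close> have "V (t K) < e" by (intro R) simp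
  have "p * V \<tau> = p * (V \<tau> - V (t K)) + p * V (t K)" by (simp add: algebra_simps)
  also have "\<dots> \<le> C + p * e"
    using le[of K] \<open>V (t K) < e\<close> p by (intro add_mono mult_left_mono) (auto simp: K_def)
  finally show "p * V \<tau> \<le> C + p * e" .
qed (rule p)

lemma weight_Ioc_measurable:
  assumes "\<psi> \<in> borel_measurable (restrict_space borel {0<..})"
  shows "(\<lambda>s. ennreal (\<psi> s * g0 T b s) * indicator {0<..\<tau>} s) \<in> borel_measurable lborel"
proof -
  have "(\<lambda>s. ennreal (\<psi> s * indicator {0<..} s * g0 T b s) * indicator {0<..\<tau>} s) \<in> borel_measurable lborel"
    using borel_measurable_restrict_Ioi_indicator[OF assms] by measurable
  then show ?thesis by (rule measurable_cong[THEN iffD1, rotated]) (auto simp: indicator_def)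
qed

theorem hardy_lower:
  assumes \<psi>: "\<psi> \<in> borel_measurable (restrict_space borel {0<..})" "\<forall>s>0. 0 \<le> \<psi> s"
    and hardy: "hardy_ineq T b \<psi> (ennreal C)" and C: "0 \<le> C" and \<tau>: "0 < \<tau>"
  shows "(\<integral>\<^sup>+s\<in>{0<..\<tau>}. ennreal (\<psi> s * g0 T b s) \<partial>lborel) * (\<integral>\<^sup>+s\<in>{\<tau><..}. ennreal (1 / g0 T b s) \<partial>lborel)
    \<le> ennreal C"
proof -
  obtain j where tau: "t j < \<tau>" "\<tau> \<le> t (Suc j)" using ex_edge_Ioc[OF \<tau>] by blast
  define P where "P = (\<integral>\<^sup>+s\<in>{0<..\<tau>}. ennreal (\<psi> s * g0 T b s) \<partial>lborel)"
  have is_test: "radial_test T b j K \<nu> \<tau>" if "Suc (Suc j) \<le> K" "0 < \<nu>" for K \<nu>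
    using tau that by unfold_locales auto
  note key = radial_test.hardy_ineq_test_fun[OF is_test \<psi>(2) weight_Ioc_measurable[OF \<psi>(1)] hardy C,
      folded P_def]
  have "P \<noteq> \<infinity>"
    using key[of "Suc (Suc j)" 1] radial_test.test_fun_tau_pos[OF is_test[of "Suc (Suc j)" 1]]
    by (auto simp: ennreal_top_mult top_unique)
  then obtain p where p: "P = ennreal p" "0 \<le> p" by (cases P) auto
  have "p * (V \<tau> - V (t K)) \<le> C" if K: "Suc (Suc j) \<le> K" for K
  proof (rule V_diff_le_of_test_fun_bound[OF tau K p(2) C])
    fix \<nu> :: real assume "0 < \<nu>"
    interpret radial_test T b j K \<nu> \<tau> using is_test[OF K \<open>0 < \<nu>\<close>] .
    have "0 \<le> C * test_fun 0" using C test_fun_tau_le[of 0] test_fun_tau_pos \<tau> by simp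
    moreover have "ennreal (p * (test_fun \<tau>)\<^sup>2) \<le> ennreal (C * test_fun 0)"
      using key[OF K \<open>0 < \<nu>\<close>] ennreal_mult'[OF p(2), of "(test_fun \<tau>)\<^sup>2"] p(1) by simp
    ultimately show "p * (test_fun \<tau>)\<^sup>2 \<le> C * test_fun 0" by (simp add: ennreal_le_iff)
  qed
  then have "p * V \<tau> \<le> C" using p(2) by (rule mult_V_le_of_forall_V_diff_le)
  then show ?thesis using p \<tau> by (simp add: P_def[symmetric] V_eq ennreal_mult[symmetric] ennreal_leI)
qed

lemma Mconst_le_of_hardy_ineq:
  assumes \<psi>: "\<psi> \<in> borel_measurable (restrict_space borel {0<..})" "\<forall>s>0. 0 \<le> \<psi> s"
    and hardy: "hardy_ineq T b \<psi> C"
  shows "Mconst T b \<psi> \<le> C"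
proof (cases C)
  case (real c)
  then have "hardy_ineq T b \<psi> (ennreal (max c 0))"
    using hardy by (cases "0 \<le> c") (auto simp: ennreal_neg)
  then have "Mconst T b \<psi> \<le> ennreal (max c 0)"
    unfolding Mconst_def using \<psi> by (intro SUP_least hardy_lower) auto
  with real show ?thesis by (cases "0 \<le> c") (auto simp: ennreal_neg)
qed simp

lemma hardy_ineq_of_Mconst:
  assumes \<psi>: "\<psi> \<in> borel_measurable (restrict_space borel {0<..})" "\<forall>s>0. 0 \<le> \<psi> s"
    and M: "Mconst T b \<psi> = ennreal m" and m: "0 \<le> m"
  shows "hardy_ineq T b \<psi> (ennreal (4 * m))"
proof -
  define \<psi>0 where "\<psi>0 s = \<psi> s * indicator {0<..} s" for s
  have [measurable]: "\<psi>0 \<in> borel_measurable borel"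
    unfolding \<psi>0_def[abs_def] by (rule borel_measurable_restrict_Ioi_indicator[OF \<psi>(1)])
  have nonneg: "\<forall>s>0. 0 \<le> \<psi>0 s" using \<psi>(2) by (simp add: \<psi>0_def)
  have M0: "M_bounded \<psi>0 m"
    unfolding M_bounded_def
  proof (intro allI impI)
    fix \<tau> :: real assume "0 < \<tau>"
    have "(\<integral>\<^sup>+s. ennreal (\<psi>0 s * g0 T b s) * indicator {0<..\<tau>} s \<partial>lborel)
        = (\<integral>\<^sup>+s\<in>{0<..\<tau>}. ennreal (\<psi> s * g0 T b s) \<partial>lborel)"
      by (intro nn_integral_cong) (simp add: \<psi>0_def indicator_def)
    moreover have "(\<integral>\<^sup>+s\<in>{0<..\<tau>}. ennreal (\<psi> s * g0 T b s) \<partial>lborel) * ennreal (V \<tau>) \<le> Mconst T b \<psi>"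
      unfolding Mconst_def V_eq[symmetric] using \<open>0 < \<tau>\<close> by (intro SUP_upper) simp
    ultimately show "(\<integral>\<^sup>+s. ennreal (\<psi>0 s * g0 T b s) * indicator {0<..\<tau>} s \<partial>lborel) * ennreal (V \<tau>)
        \<le> ennreal m"
      using M by simp
  qed
  show ?thesis
    unfolding hardy_ineq_def
  proof (intro allI impI)
    fix u assume "C0inf T b u"
    interpret frh_tree_fun T b u by unfold_locales fact
    have "tree_int T b (\<lambda>s w. \<psi> s * (u s w)\<^sup>2) = tree_int T b (\<lambda>s w. \<psi>0 s * (u s w)\<^sup>2)"
      unfolding tree_int_def by (intro nn_integral_cong) (simp add: \<psi>0_def indicator_def)
    also have "\<dots> \<le> ennreal (4 * m) * tree_int T b (\<lambda>s w. (deriv (\<lambda>r. u r w) s)\<^sup>2)"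
      by (rule hardy_upper[OF _ nonneg M0 m]) measurable
    finally show "tree_int T b (\<lambda>s w. \<psi> s * (u s w)\<^sup>2)
        \<le> ennreal (4 * m) * tree_int T b (\<lambda>s w. (deriv (\<lambda>r. u r w) s)\<^sup>2)" .
  qed
qed

end

theorem theorem2p1:
  fixes T :: "nat \<Rightarrow> ereal" and b :: "nat \<Rightarrow> nat" and \<psi> :: "real \<Rightarrow> real"
  assumes "reg_tree T b"
    and "(SUP k. T k) = \<infinity>"
    and "(\<integral>\<^sup>+ s\<in>{0<..}. ennreal (1 / g0 T b s) \<partial>lborel) < \<infinity>"
    and "\<psi> \<in> borel_measurable (restrict_space borel {0<..})"
    and "\<forall>s>0. 0 \<le> \<psi> s"
  shows "((\<exists>C::real. hardy_ineq T b \<psi> (ennreal C)) \<longleftrightarrow> Mconst T b \<psi> < \<infinity>)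
       \<and> Mconst T b \<psi> \<le> sharp_const T b \<psi>
       \<and> sharp_const T b \<psi> \<le> 4 * Mconst T b \<psi>"
proof -
  interpret frh_tree T b using assms(1-3) by unfold_locales
  note lower = Mconst_le_of_hardy_ineq[OF assms(4,5)]
  note upper = hardy_ineq_of_Mconst[OF assms(4,5)]
  have "sharp_const T b \<psi> \<le> 4 * Mconst T b \<psi>"
  proof (cases "Mconst T b \<psi>")
    case (real m)
    then have "sharp_const T b \<psi> \<le> ennreal (4 * m)"
      unfolding sharp_const_def using upper by (intro Inf_lower) simp
    with real show ?thesis by (simp add: ennreal_mult)
  qed (simp add: ennreal_mult_top)
  moreover have "Mconst T b \<psi> \<le> sharp_const T b \<psi>"
    unfolding sharp_const_def using lower by (intro Inf_greatest) simp
  moreover have "(\<exists>C::real. hardy_ineq T b \<psi> (ennreal C)) \<longleftrightarrow> Mconst T b \<psi> < \<infinity>"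
  proof
    assume "\<exists>C::real. hardy_ineq T b \<psi> (ennreal C)"
    then obtain C :: real where "hardy_ineq T b \<psi> (ennreal C)" by blast
    then have "Mconst T b \<psi> \<le> ennreal C" by (rule lower)
    then show "Mconst T b \<psi> < \<infinity>" by (simp add: le_less_trans)
  next
    assume "Mconst T b \<psi> < \<infinity>"
    then show "\<exists>C::real. hardy_ineq T b \<psi> (ennreal C)" using upper by (cases "Mconst T b \<psi>") auto
  qed
  ultimately show ?thesis by blast
qed

end
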